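(* Let $\mathcal{S}$ be a finite elation generalized quadrangle of order $(s,t)$ with elation group $G$ and associated $4$-gonal family $(G,\{A_i\}_{i=0}^t,\{A_i^*\}_{i=0}^t)$. In $\mathbb{R}[G]$ put $S:=\sum_{i=0}^t(sA_i+A_i^* )$ and $T:=\sum_{i=0}^t(tA_i-A_i^* )$. Let $\chi$ be a nonlinear irreducible complex character of $G$, extended linearly to $\mathbb{R}[G]$. Then \[\chi(S)=s(s+t)\,\omega_\chi,\qquad \chi(T)=\frac{(s+t)st}{\gcd(s,t)}\,z_\chi\] for some nonnegative integers $\omega_\chi, z_\chi$.
   Context: A generalized quadrangle of order $(s,t)$: each line has $s+1$ points, each point is on $t+1$ lines, and for each non-incident point-line pair $(P,\ell)$ there is a unique point on $\ell$ collinear with $P$. An elation about $P$ is an automorphism that is the identity or fixes each line through $P$ and no point not collinear with $P$. $\mathcal{S}$ is an elation generalized quadrangle with base point $P$ and elation group $G$ if $G$ consists of elations about $P$ and acts regularly on the points not collinear with $P$. The associated $4$-gonal family: fix a point $y$ not collinear with $P$, let $M_0,\dots,M_t$ be the lines through $y$, let $z_i$ be the unique point of $M_i$ collinear with $P$, and let $A_i$, $A_i^*$ be the stabilizers in $G$ of $M_i$ and $z_i$ respectively. In $\mathbb{R}[G]$ a subset is identified with the sum of its elements. *)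

theory Defs
  imports "HOL-Algebra.Group" "Jordan_Normal_Form.Matrix"
begin

definition collinear :: "'l set \<Rightarrow> ('p \<Rightarrow> 'l \<Rightarrow> bool) \<Rightarrow> 'p \<Rightarrow> 'p \<Rightarrow> bool" where
  "collinear Lns inc x y \<longleftrightarrow> (\<exists>l\<in>Lns. inc x l \<and> inc y l)"

definition is_GQ :: "'p set \<Rightarrow> 'l set \<Rightarrow> ('p \<Rightarrow> 'l \<Rightarrow> bool) \<Rightarrow> nat \<Rightarrow> nat \<Rightarrow> bool" where
  "is_GQ Pts Lns inc s t \<longleftrightarrow>
     finite Pts \<and> finite Lns \<and> s \<ge> 1 \<and> t \<ge> 1 \<and>
     (\<forall>x l. inc x l \<longrightarrow> x \<in> Pts \<and> l \<in> Lns) \<and>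
     (\<forall>l\<in>Lns. card {x\<in>Pts. inc x l} = s + 1) \<and>
     (\<forall>x\<in>Pts. card {l\<in>Lns. inc x l} = t + 1) \<and>
     (\<forall>x\<in>Pts. \<forall>y\<in>Pts. \<forall>l\<in>Lns. \<forall>m\<in>Lns.
        x \<noteq> y \<and> inc x l \<and> inc y l \<and> inc x m \<and> inc y m \<longrightarrow> l = m) \<and>
     (\<forall>x\<in>Pts. \<forall>l\<in>Lns. \<not> inc x l \<longrightarrow>
        (\<exists>!z. z \<in> Pts \<and> inc z l \<and> collinear Lns inc x z))"

definition is_aut_action ::
  "('g, 'm) monoid_scheme \<Rightarrow> 'p set \<Rightarrow> 'l set \<Rightarrow> ('p \<Rightarrow> 'l \<Rightarrow> bool)
   \<Rightarrow> ('g \<Rightarrow> 'p \<Rightarrow> 'p) \<Rightarrow> ('g \<Rightarrow> 'l \<Rightarrow> 'l) \<Rightarrow> bool" where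
  "is_aut_action G Pts Lns inc ap al \<longleftrightarrow>
     (\<forall>g\<in>carrier G. bij_betw (ap g) Pts Pts \<and> bij_betw (al g) Lns Lns \<and>
        (\<forall>x\<in>Pts. \<forall>l\<in>Lns. inc x l \<longleftrightarrow> inc (ap g x) (al g l))) \<and>
     (\<forall>g\<in>carrier G. \<forall>h\<in>carrier G.
        (\<forall>x\<in>Pts. ap (g \<otimes>\<^bsub>G\<^esub> h) x = ap g (ap h x)) \<and>
        (\<forall>l\<in>Lns. al (g \<otimes>\<^bsub>G\<^esub> h) l = al g (al h l))) \<and>
     (\<forall>x\<in>Pts. ap \<one>\<^bsub>G\<^esub> x = x) \<and> (\<forall>l\<in>Lns. al \<one>\<^bsub>G\<^esub> l = l)"

definition is_elation ::
  "'p set \<Rightarrow> 'l set \<Rightarrow> ('p \<Rightarrow> 'l \<Rightarrow> bool) \<Rightarrow> 'p \<Rightarrow> ('p \<Rightarrow> 'p) \<Rightarrow> ('l \<Rightarrow> 'l) \<Rightarrow> bool" where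
  "is_elation Pts Lns inc P f g \<longleftrightarrow>
     ((\<forall>x\<in>Pts. f x = x) \<and> (\<forall>l\<in>Lns. g l = l)) \<or>
     ((\<forall>l\<in>Lns. inc P l \<longrightarrow> g l = l) \<and>
      (\<forall>x\<in>Pts. \<not> collinear Lns inc P x \<longrightarrow> f x \<noteq> x))"

definition noncollinear_pts :: "'p set \<Rightarrow> 'l set \<Rightarrow> ('p \<Rightarrow> 'l \<Rightarrow> bool) \<Rightarrow> 'p \<Rightarrow> 'p set" where
  "noncollinear_pts Pts Lns inc P = {x\<in>Pts. \<not> collinear Lns inc P x}"

definition is_EGQ ::
  "'p set \<Rightarrow> 'l set \<Rightarrow> ('p \<Rightarrow> 'l \<Rightarrow> bool) \<Rightarrow> nat \<Rightarrow> nat \<Rightarrow> 'p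
   \<Rightarrow> ('g, 'm) monoid_scheme \<Rightarrow> ('g \<Rightarrow> 'p \<Rightarrow> 'p) \<Rightarrow> ('g \<Rightarrow> 'l \<Rightarrow> 'l) \<Rightarrow> bool" where
  "is_EGQ Pts Lns inc s t P G ap al \<longleftrightarrow>
     is_GQ Pts Lns inc s t \<and> P \<in> Pts \<and> group G \<and>
     is_aut_action G Pts Lns inc ap al \<and>
     (\<forall>g\<in>carrier G. is_elation Pts Lns inc P (ap g) (al g)) \<and>
     (\<forall>x\<in>noncollinear_pts Pts Lns inc P. \<forall>y\<in>noncollinear_pts Pts Lns inc P.
        \<exists>!g. g \<in> carrier G \<and> ap g x = y)"

definition stab_line :: "('g, 'm) monoid_scheme \<Rightarrow> ('g \<Rightarrow> 'l \<Rightarrow> 'l) \<Rightarrow> 'l \<Rightarrow> 'g set" where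
  "stab_line G al M = {g\<in>carrier G. al g M = M}"

definition stab_pt :: "('g, 'm) monoid_scheme \<Rightarrow> ('g \<Rightarrow> 'p \<Rightarrow> 'p) \<Rightarrow> 'p \<Rightarrow> 'g set" where
  "stab_pt G ap z = {g\<in>carrier G. ap g z = z}"

definition proj_pt :: "'p set \<Rightarrow> 'l set \<Rightarrow> ('p \<Rightarrow> 'l \<Rightarrow> bool) \<Rightarrow> 'p \<Rightarrow> 'l \<Rightarrow> 'p" where
  "proj_pt Pts Lns inc P M = (THE z. z \<in> Pts \<and> inc z M \<and> collinear Lns inc P z)"

text \<open>A_M = stabilizer of the line M through y, A_M^* = stabilizer of z_M.\<close>
definition fam_A where "fam_A G al M = stab_line G al M"
definition fam_Astar where
  "fam_Astar Pts Lns inc P G ap M = stab_pt G ap (proj_pt Pts Lns inc P M)"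

text \<open>Elements of R[G] are coefficient functions on carrier G; a subset is the sum of its elements.\<close>
definition set_elem :: "'g set \<Rightarrow> 'g \<Rightarrow> real" where
  "set_elem A = (\<lambda>g. if g \<in> A then 1 else 0)"

definition elem_S where
  "elem_S Pts Lns inc s P G ap al y =
     (\<lambda>g. \<Sum>M\<in>{M\<in>Lns. inc y M}.
        real s * set_elem (fam_A G al M) g + set_elem (fam_Astar Pts Lns inc P G ap M) g)"

definition elem_T where
  "elem_T Pts Lns inc t P G ap al y =
     (\<lambda>g. \<Sum>M\<in>{M\<in>Lns. inc y M}.
        real t * set_elem (fam_A G al M) g - set_elem (fam_Astar Pts Lns inc P G ap M) g)"

definition char_ext :: "('g, 'm) monoid_scheme \<Rightarrow> ('g \<Rightarrow> complex) \<Rightarrow> ('g \<Rightarrow> real) \<Rightarrow> complex" where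
  "char_ext G \<chi> a = (\<Sum>g\<in>carrier G. complex_of_real (a g) * \<chi> g)"

definition is_rep :: "('g, 'm) monoid_scheme \<Rightarrow> nat \<Rightarrow> ('g \<Rightarrow> complex mat) \<Rightarrow> bool" where
  "is_rep G n \<rho> \<longleftrightarrow>
     (\<forall>g\<in>carrier G. \<rho> g \<in> carrier_mat n n) \<and>
     (\<forall>g\<in>carrier G. \<forall>h\<in>carrier G. \<rho> (g \<otimes>\<^bsub>G\<^esub> h) = \<rho> g * \<rho> h) \<and>
     \<rho> \<one>\<^bsub>G\<^esub> = 1\<^sub>m n"

definition invariant_subspace ::
  "('g, 'm) monoid_scheme \<Rightarrow> nat \<Rightarrow> ('g \<Rightarrow> complex mat) \<Rightarrow> complex vec set \<Rightarrow> bool" where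
  "invariant_subspace G n \<rho> W \<longleftrightarrow>
     W \<subseteq> carrier_vec n \<and> 0\<^sub>v n \<in> W \<and>
     (\<forall>v\<in>W. \<forall>w\<in>W. v + w \<in> W) \<and> (\<forall>c. \<forall>v\<in>W. c \<cdot>\<^sub>v v \<in> W) \<and>
     (\<forall>g\<in>carrier G. \<forall>w\<in>W. \<rho> g *\<^sub>v w \<in> W)"

definition irreducible_rep :: "('g, 'm) monoid_scheme \<Rightarrow> nat \<Rightarrow> ('g \<Rightarrow> complex mat) \<Rightarrow> bool" where
  "irreducible_rep G n \<rho> \<longleftrightarrow> n > 0 \<and> is_rep G n \<rho> \<and>
     \<not> (\<exists>W. invariant_subspace G n \<rho> W \<and> W \<noteq> {0\<^sub>v n} \<and> W \<noteq> carrier_vec n)"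

definition mat_trace :: "complex mat \<Rightarrow> complex" where
  "mat_trace A = (\<Sum>i<dim_row A. A $$ (i, i))"

definition irreducible_character :: "('g, 'm) monoid_scheme \<Rightarrow> ('g \<Rightarrow> complex) \<Rightarrow> bool" where
  "irreducible_character G \<chi> \<longleftrightarrow>
     (\<exists>n \<rho>. irreducible_rep G n \<rho> \<and> (\<forall>g\<in>carrier G. \<chi> g = mat_trace (\<rho> g)))"

definition nonlinear_character :: "('g, 'm) monoid_scheme \<Rightarrow> ('g \<Rightarrow> complex) \<Rightarrow> bool" where
  "nonlinear_character G \<chi> \<longleftrightarrow> \<chi> \<one>\<^bsub>G\<^esub> \<noteq> 1"

end

theory Submission
  imports Defs "Jordan_Normal_Form.Schur_Decomposition" "HOL-Library.Indicator_Function"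
begin

(*
  Write a = \<Sum> A\<^sub>i and a\<^sup>* = \<Sum> A\<^sub>i\<^sup>* in the group algebra.  Counting, for each g, the
  factorisations g = u v with v \<in> A\<^sub>j and u in A\<^sub>i or in A\<^sub>i\<^sup>*, using only the axioms of the
  quadrangle and the regularity of G on the points opposite to P, gives
    a\<^sup>2 = (s + t) a + (t + 1) G - a\<^sup>*   and   a\<^sup>* a = s a\<^sup>* + t (t + 1) G,
  and moreover A\<^sub>i\<^sup>2 = s A\<^sub>i.  A nonlinear irreducible representation \<rho> kills G, so X = \<rho> a
  and Y = \<rho> a\<^sup>* satisfy X\<^sup>2 = (s + t) X - Y and Y X = s Y.  Hence Y / (s t), (t X - Y) / (t (s + t))
  and every \<rho> A\<^sub>i / s are idempotent matrices, whose traces are natural numbers.  Since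
  \<chi> S = s tr X + tr Y and \<chi> T = tr (t X - Y), the claim follows by elementary arithmetic.
*)

lemma sum_card_filter_swap:
  assumes "finite X" "finite Y"
  shows "(\<Sum>x\<in>X. card {y\<in>Y. R x y}) = (\<Sum>y\<in>Y. card {x\<in>X. R x y})"
proof -
  have "(\<Sum>x\<in>X. card {y\<in>Y. R x y}) = (\<Sum>x\<in>X. \<Sum>y\<in>Y. of_bool (R x y))"
    using assms by (simp add: Int_def)
  also have "\<dots> = (\<Sum>y\<in>Y. \<Sum>x\<in>X. of_bool (R x y))" by (rule sum.swap)
  also have "\<dots> = (\<Sum>y\<in>Y. card {x\<in>X. R x y})"
    using assms by (simp add: Int_def)
  finally show ?thesis .
qed

lemma card_fiber_bij_betw:
  assumes "bij_betw f X Y" and "b \<in> Y"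
  shows "card {a\<in>X. f a = b} = 1"
proof -
  obtain a where a: "a \<in> X" "f a = b" using assms by (auto simp: bij_betw_def)
  have "{a\<in>X. f a = b} = {a}"
    using a assms(1) unfolding bij_betw_def inj_on_def by blast
  then show ?thesis by simp
qed

section \<open>Traces of scaled idempotent matrices\<close>

lemma mat_trace_mult_comm:
  fixes A B :: "complex mat"
  assumes "A \<in> carrier_mat n n" "B \<in> carrier_mat n n"
  shows "mat_trace (A * B) = mat_trace (B * A)"
proof -
  have "mat_trace (A * B) = (\<Sum>i<n. \<Sum>k<n. A $$ (i,k) * B $$ (k,i))"
    using assms unfolding mat_trace_def
    by (auto simp: scalar_prod_def atLeast0LessThan intro!: sum.cong)
  also have "\<dots> = (\<Sum>k<n. \<Sum>i<n. B $$ (k,i) * A $$ (i,k))"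
    by (subst sum.swap) (simp add: mult.commute)
  also have "\<dots> = mat_trace (B * A)"
    using assms unfolding mat_trace_def
    by (auto simp: scalar_prod_def atLeast0LessThan intro!: sum.cong)
  finally show ?thesis .
qed

lemma mat_trace_similar_mat_wit:
  fixes A B :: "complex mat"
  assumes A: "A \<in> carrier_mat n n" and sim: "similar_mat_wit A B P Q"
  shows "mat_trace A = mat_trace B"
proof -
  note w = similar_mat_witD2[OF A sim]
  have "mat_trace A = mat_trace ((P * B) * Q)" using w by simp
  also have "\<dots> = mat_trace (Q * (P * B))"
    by (rule mat_trace_mult_comm[of _ n]) (use w in auto)
  also have "Q * (P * B) = (Q * P) * B"
    using w by (simp del: assoc_mult_mat add: assoc_mult_mat[of _ n n, symmetric])
  also have "\<dots> = B" using w by simp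
  finally show ?thesis .
qed

lemma mat_trace_smult:
  "A \<in> carrier_mat n n \<Longrightarrow> mat_trace (c \<cdot>\<^sub>m A) = c * mat_trace A"
  unfolding mat_trace_def by (simp add: sum_distrib_left)

lemma mat_trace_minus:
  "A \<in> carrier_mat n n \<Longrightarrow> B \<in> carrier_mat n n \<Longrightarrow> mat_trace (A - B) = mat_trace A - mat_trace B"
  unfolding mat_trace_def by (simp add: sum_subtractf)

lemma upper_triangular_idempotent_diag:
  fixes B :: "complex mat"
  assumes B: "B \<in> carrier_mat n n" and ut: "upper_triangular B" and idem: "B * B = B"
    and i: "i < n"
  shows "B $$ (i,i) = 0 \<or> B $$ (i,i) = 1"
proof -
  have "B $$ (i,i) = (\<Sum>k\<in>{0..<n}. B $$ (i,k) * B $$ (k,i))"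
    using arg_cong[OF idem, of "\<lambda>C. C $$ (i,i)"] B i by (simp add: scalar_prod_def)
  also have "\<dots> = (\<Sum>k\<in>{0..<n}. if k = i then B $$ (i,i) * B $$ (i,i) else 0)"
  proof (rule sum.cong)
    fix k assume "k \<in> {0..<n}"
    then show "B $$ (i,k) * B $$ (k,i) = (if k = i then B $$ (i,i) * B $$ (i,i) else 0)"
      using ut B i unfolding upper_triangular_def by (cases k i rule: linorder_cases) auto
  qed simp
  finally have "B $$ (i,i) * (B $$ (i,i) - 1) = 0" using i by (simp add: algebra_simps)
  then show ?thesis by auto
qed

lemma mat_trace_idempotent:
  fixes A :: "complex mat"
  assumes A: "A \<in> carrier_mat n n" and idem: "A * A = A"
  shows "\<exists>k::nat. mat_trace A = of_nat k"
proof -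
  obtain es where "char_poly A = (\<Prod>a\<leftarrow>es. [:- a, 1:])"
    using char_poly_factorized[OF A] by blast
  from schur_upper_triangular[OF A this] obtain B P Q where
    B: "B \<in> carrier_mat n n" "upper_triangular B" and sim: "similar_mat_wit A B P Q"
    unfolding similar_mat_def by blast
  have sim': "similar_mat_wit B A Q P" using sim by (rule similar_mat_wit_sym)
  have "A ^\<^sub>m 2 = A" using A idem by (simp add: numeral_2_eq_2)
  then have "B ^\<^sub>m 2 = B"
    using similar_mat_wit_pow_id[OF sim', of 2] similar_mat_witD2(3)[OF B(1) sim'] by simp
  then have BB: "B * B = B" using B(1) by (simp add: numeral_2_eq_2)
  have "mat_trace A = (\<Sum>i<n. B $$ (i,i))"
    using mat_trace_similar_mat_wit[OF A sim] B(1) unfolding mat_trace_def by simp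
  also have "\<dots> = (\<Sum>i<n. if B $$ (i,i) = 1 then 1 else 0)"
    by (rule sum.cong) (use upper_triangular_idempotent_diag[OF B BB] in auto)
  also have "\<dots> = of_nat (card {i\<in>{..<n}. B $$ (i,i) = 1})"
    by (simp add: sum.If_cases Int_def conj_commute)
  finally show ?thesis by blast
qed

lemma mat_trace_scaled_idempotent:
  fixes A :: "complex mat"
  assumes A: "A \<in> carrier_mat n n" and idem: "A * A = c \<cdot>\<^sub>m A" and c: "c \<noteq> 0"
  shows "\<exists>k::nat. mat_trace A = c * of_nat k"
proof -
  let ?E = "(1/c) \<cdot>\<^sub>m A"
  have "?E * ?E = (1/c) \<cdot>\<^sub>m ((1/c) \<cdot>\<^sub>m (A * A))"
    using A by (simp add: mult_smult_distrib[of _ n n] mult_smult_assoc_mat[of _ n n])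
  also have "\<dots> = ?E" using idem c A by (intro eq_matI) auto
  finally obtain k where "mat_trace ?E = of_nat k"
    using mat_trace_idempotent[of ?E n] A by auto
  then have "mat_trace A = c * of_nat k" using c A by (simp add: mat_trace_smult field_simps)
  then show ?thesis by blast
qed

lemma mat_mult_commute_of_square_eq:
  fixes X Y :: "complex mat"
  assumes X: "X \<in> carrier_mat n n" and Y: "Y \<in> carrier_mat n n"
    and XX: "X * X = c \<cdot>\<^sub>m X - Y"
  shows "X * Y = Y * X"
proof -
  have Y_eq: "Y = c \<cdot>\<^sub>m X - X * X"
    by (rule eq_matI) (use X Y arg_cong[OF XX, of "\<lambda>C. C $$ (_,_)"] in auto)
  have "X * Y = X * (c \<cdot>\<^sub>m X) - X * (X * X)"
    by (subst Y_eq) (rule mult_minus_distrib_mat[of _ n n], use X in auto)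
  also have "\<dots> = (c \<cdot>\<^sub>m X) * X - (X * X) * X"
    using X by (simp add: mult_smult_distrib[of _ n n] mult_smult_assoc_mat[of _ n n])
  also have "\<dots> = (c \<cdot>\<^sub>m X - X * X) * X"
    by (rule minus_mult_distrib_mat[of _ n n, symmetric]) (use X in auto)
  finally show ?thesis using Y_eq by simp
qed

lemma mat_relations_scaled_idempotent:
  fixes X Y :: "complex mat"
  assumes X: "X \<in> carrier_mat n n" and Y: "Y \<in> carrier_mat n n"
    and XX: "X * X = c1 \<cdot>\<^sub>m X - Y" and YX: "Y * X = c2 \<cdot>\<^sub>m Y"
  shows "Y * Y = (c2 * (c1 - c2)) \<cdot>\<^sub>m Y"
proof -
  have "Y * Y = Y * (c1 \<cdot>\<^sub>m X - X * X)"
    by (rule arg_cong[where f = "(*) Y"], rule eq_matI)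
       (use X Y arg_cong[OF XX, of "\<lambda>C. C $$ (_,_)"] in auto)
  also have "\<dots> = c1 \<cdot>\<^sub>m (Y * X) - (Y * X) * X"
    by (subst mult_minus_distrib_mat[of _ n n]) (use X Y in \<open>auto simp: mult_smult_distrib[of _ n n]\<close>)
  also have "\<dots> = c1 \<cdot>\<^sub>m (c2 \<cdot>\<^sub>m Y) - c2 \<cdot>\<^sub>m (c2 \<cdot>\<^sub>m Y)"
    using X Y by (simp add: YX mult_smult_assoc_mat[of _ n n])
  also have "\<dots> = (c2 * (c1 - c2)) \<cdot>\<^sub>m Y"
    by (intro eq_matI) (use Y in \<open>auto simp: algebra_simps\<close>)
  finally show ?thesis .
qed

lemma mat_relations_complement_scaled_idempotent:
  fixes X Y :: "complex mat"
  assumes X: "X \<in> carrier_mat n n" and Y: "Y \<in> carrier_mat n n"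
    and XX: "X * X = c1 \<cdot>\<^sub>m X - Y" and YX: "Y * X = c2 \<cdot>\<^sub>m Y"
  defines "d \<equiv> c1 - c2"
  shows "(d \<cdot>\<^sub>m X - Y) * (d \<cdot>\<^sub>m X - Y) = (d * c1) \<cdot>\<^sub>m (d \<cdot>\<^sub>m X - Y)"
proof -
  have XY: "X * Y = c2 \<cdot>\<^sub>m Y" using mat_mult_commute_of_square_eq[OF X Y XX] YX by simp
  have YY: "Y * Y = (c2 * d) \<cdot>\<^sub>m Y"
    unfolding d_def by (rule mat_relations_scaled_idempotent[OF X Y XX YX])
  have "(d \<cdot>\<^sub>m X - Y) * (d \<cdot>\<^sub>m X - Y) = (d \<cdot>\<^sub>m X) * (d \<cdot>\<^sub>m X - Y) - Y * (d \<cdot>\<^sub>m X - Y)"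
    by (rule minus_mult_distrib_mat[of _ n n]) (use X Y in auto)
  also have "\<dots> = ((d \<cdot>\<^sub>m X) * (d \<cdot>\<^sub>m X) - (d \<cdot>\<^sub>m X) * Y) - (Y * (d \<cdot>\<^sub>m X) - Y * Y)"
    using X Y by (simp add: mult_minus_distrib_mat[of _ n n _ n])
  also have "\<dots> = d \<cdot>\<^sub>m (d \<cdot>\<^sub>m (X * X)) - d \<cdot>\<^sub>m (X * Y) - (d \<cdot>\<^sub>m (Y * X) - Y * Y)"
    using X Y by (simp add: mult_smult_distrib[of _ n n] mult_smult_assoc_mat[of _ n n])
  also have "\<dots> = (d * c1) \<cdot>\<^sub>m (d \<cdot>\<^sub>m X - Y)"
    unfolding XX XY YX YY d_def by (intro eq_matI) (use X Y in \<open>auto simp: algebra_simps\<close>)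
  finally show ?thesis .
qed

section \<open>Representations extended to the group algebra\<close>

definition rep_ext :: "('g, 'm) monoid_scheme \<Rightarrow> nat \<Rightarrow> ('g \<Rightarrow> complex mat) \<Rightarrow> ('g \<Rightarrow> complex) \<Rightarrow> complex mat"
  where "rep_ext G n \<rho> f = mat n n (\<lambda>(i,j). \<Sum>g\<in>carrier G. f g * \<rho> g $$ (i,j))"

definition group_conv :: "('g, 'm) monoid_scheme \<Rightarrow> ('g \<Rightarrow> complex) \<Rightarrow> ('g \<Rightarrow> complex) \<Rightarrow> 'g \<Rightarrow> complex"
  where "group_conv G f h = (\<lambda>g. \<Sum>v\<in>carrier G. f (g \<otimes>\<^bsub>G\<^esub> inv\<^bsub>G\<^esub> v) * h v)"

lemma group_conv_sum_left:
  "finite I \<Longrightarrow> group_conv G (\<lambda>g. \<Sum>i\<in>I. f i g) h g = (\<Sum>i\<in>I. group_conv G (f i) h g)"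
  unfolding group_conv_def by (simp add: sum_distrib_right) (rule sum.swap)

lemma group_conv_sum_right:
  "finite I \<Longrightarrow> group_conv G f (\<lambda>g. \<Sum>i\<in>I. h i g) g = (\<Sum>i\<in>I. group_conv G f (h i) g)"
  unfolding group_conv_def by (simp add: sum_distrib_left) (rule sum.swap)

lemma (in group) group_conv_indicator:
  assumes "finite (carrier G)" and "K \<subseteq> carrier G"
  shows "group_conv G (indicator H) (indicator K) g = of_nat (card {v\<in>K. g \<otimes> inv v \<in> H})"
proof -
  have "group_conv G (indicator H) (indicator K) g
      = (\<Sum>v\<in>carrier G. if v \<in> K \<and> g \<otimes> inv v \<in> H then 1 else 0)"
    unfolding group_conv_def indicator_def by (intro sum.cong refl) auto
  also have "\<dots> = of_nat (card {v\<in>carrier G. v \<in> K \<and> g \<otimes> inv v \<in> H})"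
    using assms(1) by (simp add: sum.If_cases Int_def conj_commute)
  also have "{v\<in>carrier G. v \<in> K \<and> g \<otimes> inv v \<in> H} = {v\<in>K. g \<otimes> inv v \<in> H}"
    using assms(2) by auto
  finally show ?thesis .
qed

lemma (in group) card_quotients_in_subgroup:
  assumes H: "subgroup H G" and KH: "K \<subseteq> H" and g: "g \<in> carrier G"
  shows "card {v\<in>K. g \<otimes> inv v \<in> H} = (if g \<in> H then card K else 0)"
proof -
  have "g \<otimes> inv v \<in> H \<longleftrightarrow> g \<in> H" if v: "v \<in> H" for v
  proof
    have vc: "v \<in> carrier G" using subgroup.subset[OF H] v by blast
    assume "g \<otimes> inv v \<in> H"
    then have "(g \<otimes> inv v) \<otimes> v \<in> H" using subgroup.m_closed[OF H _ v] by blast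
    then show "g \<in> H" using g vc by (simp add: m_assoc)
  next
    assume "g \<in> H"
    then show "g \<otimes> inv v \<in> H" using H v by (simp add: subgroup.m_closed subgroup.m_inv_closed)
  qed
  then have "{v\<in>K. g \<otimes> inv v \<in> H} = (if g \<in> H then K else {})" using KH by auto
  then show ?thesis by simp
qed

locale group_rep = group G for G (structure) +
  fixes n :: nat and \<rho> :: "'g \<Rightarrow> complex mat"
  assumes finite_carrier: "finite (carrier G)" and rep: "is_rep G n \<rho>"
begin

lemma rep_carrier[simp]: "g \<in> carrier G \<Longrightarrow> \<rho> g \<in> carrier_mat n n"
  using rep unfolding is_rep_def by auto

lemma rep_mult: "g \<in> carrier G \<Longrightarrow> h \<in> carrier G \<Longrightarrow> \<rho> (g \<otimes> h) = \<rho> g * \<rho> h"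
  using rep unfolding is_rep_def by auto

lemma rep_dims[simp]: "g \<in> carrier G \<Longrightarrow> dim_row (\<rho> g) = n" "g \<in> carrier G \<Longrightarrow> dim_col (\<rho> g) = n"
  using rep_carrier[of g] unfolding carrier_mat_def by auto

lemma rep_ext_carrier[simp]: "rep_ext G n \<rho> f \<in> carrier_mat n n"
  and rep_ext_dims[simp]: "dim_row (rep_ext G n \<rho> f) = n" "dim_col (rep_ext G n \<rho> f) = n"
  unfolding rep_ext_def by simp_all

lemma rep_ext_index:
  "i < n \<Longrightarrow> j < n \<Longrightarrow> rep_ext G n \<rho> f $$ (i,j) = (\<Sum>g\<in>carrier G. f g * \<rho> g $$ (i,j))"
  unfolding rep_ext_def by simp

lemma rep_ext_cong: "(\<And>g. g \<in> carrier G \<Longrightarrow> f g = h g) \<Longrightarrow> rep_ext G n \<rho> f = rep_ext G n \<rho> h"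
  unfolding rep_ext_def by (intro eq_matI) auto

lemma rep_ext_diff: "rep_ext G n \<rho> (\<lambda>g. f g - h g) = rep_ext G n \<rho> f - rep_ext G n \<rho> h"
  by (intro eq_matI) (auto simp: rep_ext_index algebra_simps sum_subtractf)

lemma rep_ext_smult: "rep_ext G n \<rho> (\<lambda>g. c * f g) = c \<cdot>\<^sub>m rep_ext G n \<rho> f"
  by (intro eq_matI) (auto simp: rep_ext_index algebra_simps sum_distrib_left)

lemma rep_ext_add_const:
  assumes "rep_ext G n \<rho> (\<lambda>_. 1) = 0\<^sub>m n n"
  shows "rep_ext G n \<rho> (\<lambda>g. f g + c) = rep_ext G n \<rho> f"
proof (rule eq_matI)
  fix i j assume "i < dim_row (rep_ext G n \<rho> f)" "j < dim_col (rep_ext G n \<rho> f)"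
  then have ij: "i < n" "j < n" by auto
  have "(\<Sum>g\<in>carrier G. \<rho> g $$ (i,j)) = 0"
    using arg_cong[OF assms, of "\<lambda>A. A $$ (i,j)"] ij by (simp add: rep_ext_index)
  then show "rep_ext G n \<rho> (\<lambda>g. f g + c) $$ (i,j) = rep_ext G n \<rho> f $$ (i,j)"
    using ij by (simp add: rep_ext_index distrib_right sum.distrib sum_distrib_left[symmetric])
qed auto

lemma mat_trace_rep_ext: "mat_trace (rep_ext G n \<rho> f) = (\<Sum>g\<in>carrier G. f g * mat_trace (\<rho> g))"
  unfolding mat_trace_def
  by (simp add: rep_ext_index sum_distrib_left) (subst sum.swap, rule sum.cong, simp_all)

lemma sum_carrier_reindex_right:
  "v \<in> carrier G \<Longrightarrow> (\<Sum>g\<in>carrier G. F g) = (\<Sum>u\<in>carrier G. F (u \<otimes> v))"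
  by (rule sum.reindex_bij_witness[of _ "\<lambda>u. u \<otimes> v" "\<lambda>g. g \<otimes> inv v"]) (auto simp: m_assoc)

lemma sum_carrier_reindex_left:
  "v \<in> carrier G \<Longrightarrow> (\<Sum>g\<in>carrier G. F g) = (\<Sum>u\<in>carrier G. F (v \<otimes> u))"
  by (rule sum.reindex_bij_witness[of _ "\<lambda>u. v \<otimes> u" "\<lambda>g. inv v \<otimes> g"]) (auto simp: m_assoc[symmetric])

lemma rep_ext_mult: "rep_ext G n \<rho> f * rep_ext G n \<rho> h = rep_ext G n \<rho> (group_conv G f h)"
proof (rule eq_matI)
  fix i j assume "i < dim_row (rep_ext G n \<rho> (group_conv G f h))" "j < dim_col (rep_ext G n \<rho> (group_conv G f h))"
  then have i: "i < n" and j: "j < n" by auto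
  have "(rep_ext G n \<rho> f * rep_ext G n \<rho> h) $$ (i,j) =
      (\<Sum>k<n. (\<Sum>u\<in>carrier G. f u * \<rho> u $$ (i,k)) * (\<Sum>v\<in>carrier G. h v * \<rho> v $$ (k,j)))"
    using i j by (simp add: scalar_prod_def rep_ext_index atLeast0LessThan)
  also have "\<dots> = (\<Sum>k<n. \<Sum>u\<in>carrier G. \<Sum>v\<in>carrier G. f u * h v * (\<rho> u $$ (i,k) * \<rho> v $$ (k,j)))"
    by (simp add: sum_product mult_ac)
  also have "\<dots> = (\<Sum>u\<in>carrier G. \<Sum>v\<in>carrier G. \<Sum>k<n. f u * h v * (\<rho> u $$ (i,k) * \<rho> v $$ (k,j)))"
    by (subst sum.swap) (intro sum.cong refl, rule sum.swap)
  also have "\<dots> = (\<Sum>u\<in>carrier G. \<Sum>v\<in>carrier G. f u * h v * (\<Sum>k<n. \<rho> u $$ (i,k) * \<rho> v $$ (k,j)))"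
    by (simp add: sum_distrib_left)
  also have "\<dots> = (\<Sum>v\<in>carrier G. \<Sum>u\<in>carrier G. f u * h v * \<rho> (u \<otimes> v) $$ (i,j))"
    by (subst sum.swap, intro sum.cong refl)
       (use i j in \<open>simp add: rep_mult scalar_prod_def atLeast0LessThan\<close>)
  also have "\<dots> = (\<Sum>v\<in>carrier G. \<Sum>g\<in>carrier G. f (g \<otimes> inv v) * h v * \<rho> g $$ (i,j))"
  proof (rule sum.cong[OF refl])
    fix v assume v: "v \<in> carrier G"
    show "(\<Sum>u\<in>carrier G. f u * h v * \<rho> (u \<otimes> v) $$ (i,j))
        = (\<Sum>g\<in>carrier G. f (g \<otimes> inv v) * h v * \<rho> g $$ (i,j))"
      using sum_carrier_reindex_right[OF v, of "\<lambda>g. f (g \<otimes> inv v) * h v * \<rho> g $$ (i,j)"] v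
      by (simp add: m_assoc)
  qed
  also have "\<dots> = rep_ext G n \<rho> (group_conv G f h) $$ (i,j)"
    using i j by (simp add: rep_ext_index group_conv_def sum_distrib_right) (subst sum.swap, simp)
  finally show "(rep_ext G n \<rho> f * rep_ext G n \<rho> h) $$ (i,j) = rep_ext G n \<rho> (group_conv G f h) $$ (i,j)" .
qed auto

lemma rep_mult_rep_ext_one:
  assumes h: "h \<in> carrier G"
  shows "\<rho> h * rep_ext G n \<rho> (\<lambda>_. 1) = rep_ext G n \<rho> (\<lambda>_. 1)"
proof (rule eq_matI)
  fix i j assume "i < dim_row (rep_ext G n \<rho> (\<lambda>_. 1))" "j < dim_col (rep_ext G n \<rho> (\<lambda>_. 1))"
  then have i: "i < n" and j: "j < n" by auto
  have "(\<rho> h * rep_ext G n \<rho> (\<lambda>_. 1)) $$ (i,j) = (\<Sum>g\<in>carrier G. \<Sum>k<n. \<rho> h $$ (i,k) * \<rho> g $$ (k,j))"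
    using i j h by (simp add: scalar_prod_def rep_ext_index atLeast0LessThan sum_distrib_left) (rule sum.swap)
  also have "\<dots> = (\<Sum>g\<in>carrier G. \<rho> (h \<otimes> g) $$ (i,j))"
    by (rule sum.cong[OF refl]) (use i j h in \<open>simp add: rep_mult scalar_prod_def atLeast0LessThan\<close>)
  also have "\<dots> = rep_ext G n \<rho> (\<lambda>_. 1) $$ (i,j)"
    using sum_carrier_reindex_left[OF h, of "\<lambda>g. \<rho> g $$ (i,j)"] i j by (simp add: rep_ext_index)
  finally show "(\<rho> h * rep_ext G n \<rho> (\<lambda>_. 1)) $$ (i,j) = rep_ext G n \<rho> (\<lambda>_. 1) $$ (i,j)" .
qed (use h in auto)

lemma invariant_subspace_fixed_vectors:
  "invariant_subspace G n \<rho> {v \<in> carrier_vec n. \<forall>h\<in>carrier G. \<rho> h *\<^sub>v v = v}"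
  unfolding invariant_subspace_def
proof (intro conjI ballI allI)
  show "0\<^sub>v n \<in> {v \<in> carrier_vec n. \<forall>h\<in>carrier G. \<rho> h *\<^sub>v v = v}"
    by (auto intro!: eq_vecI)
qed (auto simp: mult_add_distrib_mat_vec[of _ n n] mult_mat_vec[of _ n n])

lemma invariant_subspace_line_if_trivial:
  assumes triv: "\<And>h. h \<in> carrier G \<Longrightarrow> \<rho> h = 1\<^sub>m n" and w: "w \<in> carrier_vec n"
  shows "invariant_subspace G n \<rho> {c \<cdot>\<^sub>v w | c. True}"
  unfolding invariant_subspace_def
proof (intro conjI ballI allI)
  show "0\<^sub>v n \<in> {c \<cdot>\<^sub>v w | c. True}"
    by (rule CollectI, rule exI[of _ 0]) (use w in \<open>auto intro!: eq_vecI\<close>)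
  fix u v assume "u \<in> {c \<cdot>\<^sub>v w | c. True}" "v \<in> {c \<cdot>\<^sub>v w | c. True}"
  then obtain a b where "u = a \<cdot>\<^sub>v w" "v = b \<cdot>\<^sub>v w" by auto
  then show "u + v \<in> {c \<cdot>\<^sub>v w | c. True}"
    by (intro CollectI exI[of _ "a + b"]) (use w in \<open>auto intro!: eq_vecI simp: algebra_simps\<close>)
next
  fix a v assume "v \<in> {c \<cdot>\<^sub>v w | c. True}"
  then obtain b where "v = b \<cdot>\<^sub>v w" by auto
  then show "a \<cdot>\<^sub>v v \<in> {c \<cdot>\<^sub>v w | c. True}"
    by (intro CollectI exI[of _ "a * b"]) (auto intro!: eq_vecI)
next
  fix h v assume "h \<in> carrier G" "v \<in> {c \<cdot>\<^sub>v w | c. True}"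
  then show "\<rho> h *\<^sub>v v \<in> {c \<cdot>\<^sub>v w | c. True}" using triv w by auto
qed (use w in auto)

lemma not_irreducible_if_trivial:
  assumes triv: "\<And>h. h \<in> carrier G \<Longrightarrow> \<rho> h = 1\<^sub>m n" and n2: "n \<ge> 2"
  shows "\<not> irreducible_rep G n \<rho>"
proof
  let ?L = "{c \<cdot>\<^sub>v unit_vec n 0 | c :: complex. True}"
  assume "irreducible_rep G n \<rho>"
  then have "?L = {0\<^sub>v n} \<or> ?L = carrier_vec n"
    using invariant_subspace_line_if_trivial[OF triv unit_vec_carrier] unfolding irreducible_rep_def
    by blast
  moreover have "unit_vec n 0 \<in> ?L" by (intro CollectI exI[of _ 1]) auto
  moreover have "unit_vec n 1 \<notin> ?L"
  proof
    assume "unit_vec n 1 \<in> ?L"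
    then obtain c :: complex where "unit_vec n 1 = c \<cdot>\<^sub>v unit_vec n (0::nat)" by blast
    from arg_cong[OF this, of "\<lambda>v. v $ 1"] show False using n2 by simp
  qed
  moreover have "unit_vec n 0 \<noteq> 0\<^sub>v n"
  proof
    assume "unit_vec n 0 = 0\<^sub>v n"
    from arg_cong[OF this, of "\<lambda>v. v $ 0"] show False using n2 by simp
  qed
  ultimately show False using unit_vec_carrier[of n 1] by blast
qed

lemma fixed_vectors_eq_zero:
  assumes irr: "irreducible_rep G n \<rho>" and n1: "n \<noteq> 1"
  shows "{v \<in> carrier_vec n. \<forall>h\<in>carrier G. \<rho> h *\<^sub>v v = v} = {0\<^sub>v n}"
proof -
  let ?W = "{v \<in> carrier_vec n. \<forall>h\<in>carrier G. \<rho> h *\<^sub>v v = v}"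
  have "?W \<noteq> carrier_vec n"
  proof
    assume W: "?W = carrier_vec n"
    have "\<rho> h = 1\<^sub>m n" if h: "h \<in> carrier G" for h
    proof (rule eq_matI)
      fix i j assume "i < dim_row (1\<^sub>m n :: complex mat)" "j < dim_col (1\<^sub>m n :: complex mat)"
      then have i: "i < n" and j: "j < n" by auto
      have "unit_vec n j \<in> ?W" using W by simp
      then have "\<rho> h *\<^sub>v unit_vec n j = unit_vec n j" using h by blast
      from arg_cong[OF this, of "\<lambda>v. v $ i"]
      show "\<rho> h $$ (i,j) = 1\<^sub>m n $$ (i,j)" using h i j by simp
    qed (use h in auto)
    moreover have "n \<ge> 2" using irr n1 unfolding irreducible_rep_def by auto
    ultimately show False using not_irreducible_if_trivial irr by blast
  qed
  then show ?thesis
    using invariant_subspace_fixed_vectors irr unfolding irreducible_rep_def by blast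
qed

text \<open>Every column of the image of the sum of all group elements is a fixed vector.\<close>

lemma rep_ext_one_eq_zero:
  assumes irr: "irreducible_rep G n \<rho>" and n1: "n \<noteq> 1"
  shows "rep_ext G n \<rho> (\<lambda>_. 1) = 0\<^sub>m n n"
proof (rule eq_matI)
  let ?S = "rep_ext G n \<rho> (\<lambda>_. 1)"
  fix i j assume "i < dim_row (0\<^sub>m n n :: complex mat)" "j < dim_col (0\<^sub>m n n :: complex mat)"
  then have i: "i < n" and j: "j < n" by auto
  have "\<rho> h *\<^sub>v (?S *\<^sub>v unit_vec n j) = ?S *\<^sub>v unit_vec n j" if h: "h \<in> carrier G" for h
    using rep_mult_rep_ext_one[OF h] h by (simp add: assoc_mult_mat_vec[of _ n n _ n, symmetric])
  moreover have "?S *\<^sub>v unit_vec n j \<in> carrier_vec n"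
    using mult_mat_vec_carrier[OF rep_ext_carrier unit_vec_carrier] .
  ultimately have "?S *\<^sub>v unit_vec n j = 0\<^sub>v n" using fixed_vectors_eq_zero[OF irr n1] by blast
  moreover have "?S $$ (i,j) = (?S *\<^sub>v unit_vec n j) $ i" using i j by simp
  ultimately show "?S $$ (i,j) = 0\<^sub>m n n $$ (i,j)" using i j by simp
qed auto

end

section \<open>Generalized quadrangles with a group of automorphisms\<close>

locale gq =
  fixes Pts :: "'p set" and Lns :: "'l set" and inc :: "'p \<Rightarrow> 'l \<Rightarrow> bool" and s t :: nat
  assumes is_gq: "is_GQ Pts Lns inc s t"
begin

abbreviation col where "col \<equiv> collinear Lns inc"

lemma finite_Pts: "finite Pts" and finite_Lns: "finite Lns" and s_pos: "s \<ge> 1" and t_pos: "t \<ge> 1"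
  using is_gq unfolding is_GQ_def by auto

lemma inc_Pts: "inc x l \<Longrightarrow> x \<in> Pts" and inc_Lns: "inc x l \<Longrightarrow> l \<in> Lns"
  using is_gq unfolding is_GQ_def by auto

lemma card_points_on_line: "l \<in> Lns \<Longrightarrow> card {x\<in>Pts. inc x l} = s + 1"
  using is_gq unfolding is_GQ_def by auto

lemma card_lines_through: "x \<in> Pts \<Longrightarrow> card {l\<in>Lns. inc x l} = t + 1"
  using is_gq unfolding is_GQ_def by auto

lemma line_unique:
  assumes "x \<noteq> z" "inc x l" "inc z l" "inc x m" "inc z m"
  shows "l = m"
proof -
  have "x \<in> Pts" "z \<in> Pts" "l \<in> Lns" "m \<in> Lns" using assms inc_Pts inc_Lns by auto
  then show ?thesis using is_gq assms unfolding is_GQ_def by blast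
qed

lemma ex1_collinear_on_line:
  "x \<in> Pts \<Longrightarrow> l \<in> Lns \<Longrightarrow> \<not> inc x l \<Longrightarrow> \<exists>!z. z \<in> Pts \<and> inc z l \<and> col x z"
  using is_gq unfolding is_GQ_def by auto

lemma collinear_on_line_unique:
  assumes "x \<in> Pts" "l \<in> Lns" "\<not> inc x l" "inc z1 l" "inc z2 l" "col x z1" "col x z2"
  shows "z1 = z2"
  using ex1_collinear_on_line[OF assms(1-3)] assms(4-7) inc_Pts by blast

lemma collinearI: "inc x l \<Longrightarrow> inc z l \<Longrightarrow> col x z"
  unfolding collinear_def using inc_Lns by blast

lemma collinear_sym: "col x z \<Longrightarrow> col z x"
  unfolding collinear_def by blast

lemma collinearE: "col x z \<Longrightarrow> (\<And>l. l \<in> Lns \<Longrightarrow> inc x l \<Longrightarrow> inc z l \<Longrightarrow> thesis) \<Longrightarrow> thesis"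
  unfolding collinear_def by blast

lemma two_lines_through:
  assumes "x \<in> Pts"
  obtains l1 l2 where "inc x l1" "inc x l2" "l1 \<noteq> l2"
proof -
  have "Suc 1 \<le> card {l\<in>Lns. inc x l}" using card_lines_through[OF assms] t_pos by simp
  then obtain l1 B where "{l\<in>Lns. inc x l} = insert l1 B" "l1 \<notin> B" "1 \<le> card B"
    unfolding card_le_Suc_iff by blast
  moreover from \<open>1 \<le> card B\<close> obtain l2 where "l2 \<in> B" by fastforce
  ultimately show thesis using that[of l1 l2] by blast
qed

end

locale gq_aut = gq Pts Lns inc s t + group G
  for Pts :: "'p set" and Lns :: "'l set" and inc s t and G :: "('g, 'm) monoid_scheme" (structure) +
  fixes ap :: "'g \<Rightarrow> 'p \<Rightarrow> 'p" and al :: "'g \<Rightarrow> 'l \<Rightarrow> 'l"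
  assumes aut: "is_aut_action G Pts Lns inc ap al"
begin

lemma ap_closed: "g \<in> carrier G \<Longrightarrow> x \<in> Pts \<Longrightarrow> ap g x \<in> Pts"
  using aut bij_betw_apply unfolding is_aut_action_def by metis

lemma inc_ap_al_iff: "g \<in> carrier G \<Longrightarrow> x \<in> Pts \<Longrightarrow> l \<in> Lns \<Longrightarrow> inc (ap g x) (al g l) \<longleftrightarrow> inc x l"
  using aut unfolding is_aut_action_def by blast

lemma inc_ap_al: "g \<in> carrier G \<Longrightarrow> inc x l \<Longrightarrow> inc (ap g x) (al g l)"
  using inc_ap_al_iff inc_Pts inc_Lns by blast

lemma ap_mult: "g \<in> carrier G \<Longrightarrow> h \<in> carrier G \<Longrightarrow> x \<in> Pts \<Longrightarrow> ap (g \<otimes> h) x = ap g (ap h x)"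
  and al_mult: "g \<in> carrier G \<Longrightarrow> h \<in> carrier G \<Longrightarrow> l \<in> Lns \<Longrightarrow> al (g \<otimes> h) l = al g (al h l)"
  and ap_one: "x \<in> Pts \<Longrightarrow> ap \<one> x = x"
  and al_one: "l \<in> Lns \<Longrightarrow> al \<one> l = l"
  using aut unfolding is_aut_action_def by auto

lemma ap_inv_ap: "g \<in> carrier G \<Longrightarrow> x \<in> Pts \<Longrightarrow> ap (inv g) (ap g x) = x"
  using ap_mult[of "inv g" g x] ap_one by simp

lemma ap_ap_inv: "g \<in> carrier G \<Longrightarrow> x \<in> Pts \<Longrightarrow> ap g (ap (inv g) x) = x"
  using ap_mult[of g "inv g" x] ap_one by simp

lemma ap_inj_iff: "g \<in> carrier G \<Longrightarrow> x \<in> Pts \<Longrightarrow> z \<in> Pts \<Longrightarrow> ap g x = ap g z \<longleftrightarrow> x = z"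
  by (metis ap_inv_ap)

lemma ap_eq_iff_ap_inv: "g \<in> carrier G \<Longrightarrow> x \<in> Pts \<Longrightarrow> z \<in> Pts \<Longrightarrow> ap g x = z \<longleftrightarrow> ap (inv g) z = x"
  by (metis ap_inv_ap ap_ap_inv)

lemma collinear_ap:
  assumes g: "g \<in> carrier G" and "col x z"
  shows "col (ap g x) (ap g z)"
proof -
  obtain l where "inc x l" "inc z l" using \<open>col x z\<close> by (rule collinearE)
  then show ?thesis using inc_ap_al[OF g] collinearI by blast
qed

lemma collinear_ap_iff: "g \<in> carrier G \<Longrightarrow> x \<in> Pts \<Longrightarrow> z \<in> Pts \<Longrightarrow> col (ap g x) (ap g z) \<longleftrightarrow> col x z"
  using collinear_ap[of "inv g" "ap g x" "ap g z"] collinear_ap[of g x z] ap_inv_ap by auto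

lemma subgroup_stab_line:
  assumes l: "l \<in> Lns"
  shows "subgroup (stab_line G al l) G"
proof (rule subgroup.intro)
  fix g assume "g \<in> stab_line G al l"
  then have g: "g \<in> carrier G" "al g l = l" unfolding stab_line_def by auto
  have "al (inv g) l = al (inv g) (al g l)" using g by simp
  also have "\<dots> = l" using al_mult[of "inv g" g l] al_one l g by simp
  finally show "inv g \<in> stab_line G al l" using g unfolding stab_line_def by simp
qed (use l al_mult al_one in \<open>auto simp: stab_line_def\<close>)

lemma subgroup_stab_pt:
  assumes x: "x \<in> Pts"
  shows "subgroup (stab_pt G ap x) G"
proof (rule subgroup.intro)
  fix g assume "g \<in> stab_pt G ap x"
  then have g: "g \<in> carrier G" "ap g x = x" unfolding stab_pt_def by auto
  then show "inv g \<in> stab_pt G ap x" using ap_inv_ap[OF g(1) x] unfolding stab_pt_def by simp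
qed (use x ap_mult ap_one in \<open>auto simp: stab_pt_def\<close>)

end

section \<open>Elation generalized quadrangles\<close>

locale egq =
  fixes Pts :: "'p set" and Lns :: "'l set" and inc :: "'p \<Rightarrow> 'l \<Rightarrow> bool"
    and s t :: nat and P y :: 'p
    and G :: "('g, 'm) monoid_scheme" (structure) and ap :: "'g \<Rightarrow> 'p \<Rightarrow> 'p" and al :: "'g \<Rightarrow> 'l \<Rightarrow> 'l"
  assumes is_egq: "is_EGQ Pts Lns inc s t P G ap al"
    and y_noncollinear: "y \<in> noncollinear_pts Pts Lns inc P"

sublocale egq \<subseteq> gq_aut Pts Lns inc s t G ap al
proof -
  have "is_GQ Pts Lns inc s t" "group G" "is_aut_action G Pts Lns inc ap al"
    using is_egq unfolding is_EGQ_def by auto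
  then show "gq_aut Pts Lns inc s t G ap al"
    by (simp add: gq_aut_def gq_def gq_aut_axioms_def)
qed

context egq
begin

abbreviation NC where "NC \<equiv> noncollinear_pts Pts Lns inc P"

lemma NC_iff: "x \<in> NC \<longleftrightarrow> x \<in> Pts \<and> \<not> col P x"
  unfolding noncollinear_pts_def by auto

lemma P_in_Pts: "P \<in> Pts"
  using is_egq unfolding is_EGQ_def by auto

lemma y_in_Pts: "y \<in> Pts" and y_not_collinear_P: "\<not> col P y"
  using y_noncollinear NC_iff by auto

lemma elation: "g \<in> carrier G \<Longrightarrow> is_elation Pts Lns inc P (ap g) (al g)"
  using is_egq unfolding is_EGQ_def by auto

lemma ex1_ap_y: "x \<in> NC \<Longrightarrow> \<exists>!g. g \<in> carrier G \<and> ap g y = x"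
  using is_egq y_noncollinear unfolding is_EGQ_def by blast

lemma al_fixes_line_through_P: "g \<in> carrier G \<Longrightarrow> inc P l \<Longrightarrow> al g l = l"
  using elation[unfolded is_elation_def] inc_Lns by blast

text \<open>An elation fixes every line through \<open>P\<close>, and \<open>P\<close> is the meet of two of them.\<close>

lemma ap_fixes_P: "g \<in> carrier G \<Longrightarrow> ap g P = P"
proof (rule ccontr)
  assume g: "g \<in> carrier G" and ne: "ap g P \<noteq> P"
  obtain l1 l2 where l: "inc P l1" "inc P l2" "l1 \<noteq> l2" using two_lines_through[OF P_in_Pts] .
  have "inc (ap g P) l1" "inc (ap g P) l2"
    using inc_ap_al[OF g l(1)] inc_ap_al[OF g l(2)] al_fixes_line_through_P[OF g] l by auto
  then show False using line_unique[OF ne _ l(1) _ l(2)] l(3) by blast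
qed

lemma ap_NC: "g \<in> carrier G \<Longrightarrow> x \<in> NC \<Longrightarrow> ap g x \<in> NC"
  using collinear_ap_iff[OF _ P_in_Pts, of g x] ap_fixes_P ap_closed NC_iff by auto

lemma ap_y_inj: "g \<in> carrier G \<Longrightarrow> h \<in> carrier G \<Longrightarrow> ap g y = ap h y \<Longrightarrow> g = h"
  using ex1_ap_y[OF ap_NC[OF _ y_noncollinear]] by blast

lemma eq_one_if_fixes_y: "g \<in> carrier G \<Longrightarrow> ap g y = y \<Longrightarrow> g = \<one>"
  using ap_y_inj[of g \<one>] ap_one[OF y_in_Pts] by simp

lemma eq_one_if_fixes_NC:
  assumes g: "g \<in> carrier G" and x: "x \<in> NC" and fixed: "ap g x = x"
  shows "g = \<one>"
proof (cases "\<forall>x\<in>Pts. ap g x = x")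
  case True
  then show ?thesis using eq_one_if_fixes_y[OF g] y_in_Pts by blast
next
  case False
  then show ?thesis using elation[OF g] x fixed unfolding is_elation_def NC_iff by blast
qed

lemma finite_carrier: "finite (carrier G)"
proof -
  have "inj_on (\<lambda>g. ap g y) (carrier G)" using ap_y_inj by (auto simp: inj_on_def)
  moreover have "(\<lambda>g. ap g y) ` carrier G \<subseteq> Pts" using ap_closed y_in_Pts by auto
  moreover have "finite ((\<lambda>g. ap g y) ` carrier G)"
    using finite_Pts calculation(2) by (rule finite_subset[rotated])
  ultimately show ?thesis using finite_imageD by blast
qed

section \<open>The 4-gonal family\<close>

text \<open>The \<open>A\<^sub>i\<close>, \<open>A\<^sub>i\<^sup>*\<close> and \<open>z\<^sub>i\<close> of the statement are indexed by the line \<open>M\<^sub>i\<close> through \<open>y\<close>: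
  they are \<open>A M\<^sub>i\<close>, \<open>A_star M\<^sub>i\<close> and \<open>proj M\<^sub>i\<close>.\<close>

abbreviation lines_y where "lines_y \<equiv> {M\<in>Lns. inc y M}"
abbreviation proj where "proj M \<equiv> proj_pt Pts Lns inc P M"
abbreviation A where "A M \<equiv> fam_A G al M"
abbreviation A_star where "A_star M \<equiv> fam_Astar Pts Lns inc P G ap M"

lemma A_iff: "g \<in> A M \<longleftrightarrow> g \<in> carrier G \<and> al g M = M"
  unfolding fam_A_def stab_line_def by simp

lemma A_star_iff: "g \<in> A_star M \<longleftrightarrow> g \<in> carrier G \<and> ap g (proj M) = proj M"
  unfolding fam_Astar_def stab_pt_def by simp

lemma not_inc_P_line_y: "M \<in> lines_y \<Longrightarrow> \<not> inc P M"
  using collinearI[of P M y] y_not_collinear_P by auto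

lemma proj_ex1: "M \<in> lines_y \<Longrightarrow> \<exists>!z. z \<in> Pts \<and> inc z M \<and> col P z"
  using ex1_collinear_on_line[OF P_in_Pts _ not_inc_P_line_y] by blast

lemma proj_spec: "M \<in> lines_y \<Longrightarrow> proj M \<in> Pts \<and> inc (proj M) M \<and> col P (proj M)"
  unfolding proj_pt_def by (rule theI'[OF proj_ex1])

lemma proj_unique: "M \<in> lines_y \<Longrightarrow> z \<in> Pts \<Longrightarrow> inc z M \<Longrightarrow> col P z \<Longrightarrow> z = proj M"
  unfolding proj_pt_def by (rule the1_equality[OF proj_ex1, symmetric]) auto

lemma proj_ne_y: "M \<in> lines_y \<Longrightarrow> proj M \<noteq> y"
  using proj_spec y_not_collinear_P by auto

lemma proj_ne_P: "M \<in> lines_y \<Longrightarrow> proj M \<noteq> P"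
  using proj_spec[of M] not_inc_P_line_y[of M] by auto

lemma NC_if_on_line_y:
  assumes M: "M \<in> lines_y" and x: "inc x M" "x \<noteq> proj M"
  shows "x \<in> NC"
proof -
  have "x \<in> Pts" using x inc_Pts by blast
  then show ?thesis using proj_unique[OF M _ x(1)] x(2) NC_iff by blast
qed

lemma not_inc_NC_line_through_P: "x \<in> NC \<Longrightarrow> inc P l \<Longrightarrow> \<not> inc x l"
  using NC_iff collinearI by blast

definition P_line :: "'l \<Rightarrow> 'l"
  where "P_line M = (SOME l. l \<in> Lns \<and> inc P l \<and> inc (proj M) l)"

lemma P_line_spec: "M \<in> lines_y \<Longrightarrow> P_line M \<in> Lns \<and> inc P (P_line M) \<and> inc (proj M) (P_line M)"
  unfolding P_line_def by (rule someI_ex) (use proj_spec in \<open>blast elim: collinearE\<close>)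

text \<open>Since \<open>g\<close> fixes the line \<open>P_line M\<close>, both \<open>proj M\<close> and its image are the point
  of \<open>P_line M\<close> collinear with \<open>g y\<close>.\<close>

lemma fixes_proj_if_collinear:
  assumes g: "g \<in> carrier G" and M: "M \<in> lines_y" and c: "col (proj M) (ap g y)"
  shows "ap g (proj M) = proj M"
proof -
  have L: "P_line M \<in> Lns" "inc P (P_line M)" "inc (proj M) (P_line M)" using P_line_spec[OF M] by auto
  have gy: "ap g y \<in> NC" using ap_NC[OF g y_noncollinear] .
  have "inc (ap g (proj M)) (P_line M)"
    using inc_ap_al[OF g L(3)] al_fixes_line_through_P[OF g L(2)] by simp
  moreover have "col (ap g (proj M)) (ap g y)"
    using collinear_ap[OF g collinearI[of "proj M" M y]] proj_spec[OF M] M by auto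
  moreover have "ap g y \<in> Pts" using gy NC_iff by blast
  ultimately show ?thesis
    using collinear_on_line_unique[OF _ L(1) not_inc_NC_line_through_P[OF gy L(2)] _ L(3)
        collinear_sym collinear_sym[OF c]] by blast
qed

lemma A_iff_inc:
  assumes g: "g \<in> carrier G" and M: "M \<in> lines_y"
  shows "g \<in> A M \<longleftrightarrow> inc (ap g y) M"
proof
  assume "g \<in> A M"
  then have "al g M = M" using A_iff by simp
  then show "inc (ap g y) M" using inc_ap_al[OF g, of y M] M by simp
next
  assume u: "inc (ap g y) M"
  have zM: "inc (proj M) M" using proj_spec[OF M] by simp
  have gz: "ap g (proj M) = proj M" using fixes_proj_if_collinear[OF g M collinearI[OF zM u]] .
  have i1: "inc (ap g y) (al g M)" using inc_ap_al[OF g, of y M] M by simp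
  have i2: "inc (proj M) (al g M)" using inc_ap_al[OF g zM] gz by simp
  have ne: "proj M \<noteq> ap g y"
  proof
    assume "proj M = ap g y"
    then have "col P (ap g y)" using proj_spec[OF M] by simp
    then show False using ap_NC[OF g y_noncollinear] NC_iff by simp
  qed
  have "M = al g M" by (rule line_unique[OF ne zM u i2 i1])
  then show "g \<in> A M" using g A_iff by simp
qed

lemma A_star_iff_collinear:
  assumes g: "g \<in> carrier G" and M: "M \<in> lines_y"
  shows "g \<in> A_star M \<longleftrightarrow> col (proj M) (ap g y)"
proof
  assume "g \<in> A_star M"
  then show "col (proj M) (ap g y)"
    using collinear_ap[OF g collinearI[of "proj M" M y]] proj_spec[OF M] M A_star_iff by auto
next
  assume "col (proj M) (ap g y)"
  then show "g \<in> A_star M" using fixes_proj_if_collinear[OF g M] g A_star_iff by simp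
qed

lemma A_subset_A_star:
  assumes M: "M \<in> lines_y"
  shows "A M \<subseteq> A_star M"
proof
  fix g assume gM: "g \<in> A M"
  then have g: "g \<in> carrier G" using A_iff by simp
  have "col (proj M) (ap g y)"
    using collinearI[of "proj M" M "ap g y"] proj_spec[OF M] A_iff_inc[OF g M] gM by simp
  then show "g \<in> A_star M" using A_star_iff_collinear[OF g M] by simp
qed

lemma subgroup_A: "M \<in> lines_y \<Longrightarrow> subgroup (A M) G"
  unfolding fam_A_def by (rule subgroup_stab_line) simp

lemma subgroup_A_star: "M \<in> lines_y \<Longrightarrow> subgroup (A_star M) G"
  unfolding fam_Astar_def by (rule subgroup_stab_pt) (use proj_spec in blast)

lemma A_inter_A:
  assumes M: "M \<in> lines_y" and N: "N \<in> lines_y" and MN: "M \<noteq> N"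
    and gM: "g \<in> A M" and gN: "g \<in> A N"
  shows "g = \<one>"
proof -
  have g: "g \<in> carrier G" using gM A_iff by simp
  have u: "inc (ap g y) M" "inc (ap g y) N" using A_iff_inc[OF g M] A_iff_inc[OF g N] gM gN by auto
  have "ap g y = y"
  proof (rule ccontr)
    assume ne: "ap g y \<noteq> y"
    have "M = N" using line_unique[OF ne u(1) _ u(2)] M N by simp
    then show False using MN by simp
  qed
  then show ?thesis using eq_one_if_fixes_y[OF g] by simp
qed

lemma A_star_inter_A:
  assumes M: "M \<in> lines_y" and N: "N \<in> lines_y" and MN: "M \<noteq> N"
    and gM: "g \<in> A_star M" and gN: "g \<in> A N"
  shows "g = \<one>"
proof -
  have g: "g \<in> carrier G" using gN A_iff by simp
  have u: "inc (ap g y) N" using A_iff_inc[OF g N] gN by simp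
  have c: "col (proj M) (ap g y)" using A_star_iff_collinear[OF g M] gM by simp
  have z: "proj M \<in> Pts" "inc (proj M) M" using proj_spec[OF M] by auto
  have yM: "inc y M" and yN: "inc y N" using M N by auto
  have "\<not> inc (proj M) N"
  proof
    assume "inc (proj M) N"
    then have "M = N" by (rule line_unique[OF proj_ne_y[OF M] z(2) yM _ yN])
    then show False using MN by simp
  qed
  then have "y = ap g y"
    using collinear_on_line_unique[OF z(1) _ _ yN u collinearI[OF z(2) yM] c] N by simp
  then show ?thesis using eq_one_if_fixes_y[OF g] by simp
qed

lemma card_A:
  assumes M: "M \<in> lines_y"
  shows "card (A M) = s"
proof -
  let ?T = "{x\<in>Pts. inc x M} - {proj M}"
  have "bij_betw (\<lambda>g. ap g y) (A M) ?T"
  proof (rule bij_betwI')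
    fix g h assume "g \<in> A M" "h \<in> A M"
    then have "g \<in> carrier G" "h \<in> carrier G" using A_iff by auto
    then show "(ap g y = ap h y) = (g = h)" using ap_y_inj by blast
  next
    fix g assume g: "g \<in> A M"
    then have gc: "g \<in> carrier G" using A_iff by simp
    have "ap g y \<noteq> proj M"
    proof
      assume "ap g y = proj M"
      then have "col P (ap g y)" using proj_spec[OF M] by simp
      then show False using ap_NC[OF gc y_noncollinear] NC_iff by simp
    qed
    moreover have "inc (ap g y) M" using A_iff_inc[OF gc M] g by simp
    moreover have "ap g y \<in> Pts" using ap_closed[OF gc y_in_Pts] .
    ultimately show "ap g y \<in> ?T" by simp
  next
    fix x assume x: "x \<in> ?T"
    then have "x \<in> NC" using NC_if_on_line_y[OF M] by simp
    then obtain g where g: "g \<in> carrier G" "ap g y = x" using ex1_ap_y by blast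
    then have "g \<in> A M" using A_iff_inc[OF g(1) M] x by simp
    then show "\<exists>g\<in>A M. x = ap g y" using g by blast
  qed
  then have "card (A M) = card ?T" by (rule bij_betw_same_card)
  also have "\<dots> = card {x\<in>Pts. inc x M} - 1" using proj_spec[OF M] by (simp add: card_Diff_singleton_if)
  also have "\<dots> = s" using card_points_on_line M by simp
  finally show ?thesis .
qed

lemma P_line_inj:
  assumes M: "M \<in> lines_y" and N: "N \<in> lines_y" and MN: "M \<noteq> N"
  shows "P_line M \<noteq> P_line N"
proof
  assume e: "P_line M = P_line N"
  have L: "P_line M \<in> Lns" "inc P (P_line M)" "inc (proj M) (P_line M)" "inc (proj N) (P_line M)"
    using P_line_spec[OF M] P_line_spec[OF N] e by auto
  have zM: "inc (proj M) M" and zN: "inc (proj N) N" using proj_spec M N by auto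
  have yM: "inc y M" and yN: "inc y N" using M N by auto
  have "proj M = proj N"
    using collinear_on_line_unique[OF y_in_Pts L(1) not_inc_NC_line_through_P[OF y_noncollinear L(2)]
        L(3) L(4) collinearI[OF yM zM] collinearI[OF yN zN]] .
  then have "M = N" using line_unique[OF proj_ne_y[OF M] zM yM _ yN] zN by simp
  then show False using MN by simp
qed

lemma card_P_line_minus_P: "M \<in> lines_y \<Longrightarrow> card ({x\<in>Pts. inc x (P_line M)} - {P}) = s"
  using P_line_spec[of M] P_in_Pts card_points_on_line by (simp add: card_Diff_singleton_if)

text \<open>If \<open>v \<in> A N\<close> fixes a point \<open>w \<noteq> P\<close> of \<open>P_line M\<close>, it also fixes the point of \<open>N\<close>
  collinear with \<open>w\<close>, which is not collinear with \<open>P\<close>.\<close>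

lemma A_fixes_no_point_of_P_line:
  assumes M: "M \<in> lines_y" and N: "N \<in> lines_y" and MN: "M \<noteq> N" and v: "v \<in> A N"
    and w: "w \<in> Pts" "inc w (P_line M)" "w \<noteq> P" and fixed: "ap v w = w"
  shows "v = \<one>"
proof -
  have vc: "v \<in> carrier G" and vN: "al v N = N" using v A_iff by auto
  have LM: "P_line M \<in> Lns" "inc P (P_line M)" using P_line_spec[OF M] by auto
  have LN: "inc P (P_line N)" "inc (proj N) (P_line N)" using P_line_spec[OF N] by auto
  have LMN: "P_line M \<noteq> P_line N" using P_line_inj[OF M N MN] .
  have NL: "N \<in> Lns" using N by simp
  have zN: "proj N \<in> Pts" "inc (proj N) N" "col P (proj N)" using proj_spec[OF N] by auto
  have w_not_N: "\<not> inc w N"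
  proof
    assume "inc w N"
    then have "w = proj N" using proj_unique[OF N w(1)] collinearI[OF LM(2) w(2)] by simp
    then have "P_line M = P_line N" using line_unique[OF w(3) w(2) LM(2)] LN by simp
    then show False using LMN by simp
  qed
  obtain p where p: "p \<in> Pts" "inc p N" "col w p"
    using ex1_collinear_on_line[OF w(1) NL w_not_N] by blast
  have "p \<noteq> proj N"
  proof
    assume pz: "p = proj N"
    have "\<not> inc (proj N) (P_line M)"
    proof
      assume "inc (proj N) (P_line M)"
      then have "P_line M = P_line N" using line_unique[OF proj_ne_P[OF N]] LM(2) LN by blast
      then show False using LMN by simp
    qed
    moreover have "col (proj N) w" using collinear_sym[OF p(3)] pz by simp
    ultimately have "P = w"
      using collinear_on_line_unique[OF zN(1) LM(1) _ LM(2) w(2) collinear_sym[OF zN(3)]] by blast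
    then show False using w(3) by simp
  qed
  then have pNC: "p \<in> NC" using NC_if_on_line_y[OF N p(2)] by simp
  have "inc (ap v p) N" using inc_ap_al[OF vc p(2)] vN by simp
  moreover have "col w (ap v p)" using collinear_ap[OF vc p(3)] fixed by simp
  ultimately have "p = ap v p"
    using collinear_on_line_unique[OF w(1) NL w_not_N p(2) _ p(3)] by blast
  then show ?thesis using eq_one_if_fixes_NC[OF vc pNC] by simp
qed

lemma A_regular_on_P_line:
  assumes M: "M \<in> lines_y" and N: "N \<in> lines_y" and MN: "M \<noteq> N"
    and w: "w \<in> Pts" "inc w (P_line M)" "w \<noteq> P"
  shows "bij_betw (\<lambda>v. ap v w) (A N) ({x\<in>Pts. inc x (P_line M)} - {P})"
proof -
  let ?T = "{x\<in>Pts. inc x (P_line M)} - {P}"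
  have sub: "subgroup (A N) G" using subgroup_A[OF N] .
  have inj: "inj_on (\<lambda>v. ap v w) (A N)"
  proof (rule inj_onI)
    fix v v' assume v: "v \<in> A N" and v': "v' \<in> A N" and e: "ap v w = ap v' w"
    have vc: "v \<in> carrier G" and v'c: "v' \<in> carrier G" using v v' A_iff by auto
    have "inv v' \<otimes> v \<in> A N" using v v' sub by (simp add: subgroup.m_closed subgroup.m_inv_closed)
    moreover have "ap (inv v' \<otimes> v) w = w" using ap_mult[OF _ vc w(1)] e ap_inv_ap[OF v'c w(1)] v'c by simp
    ultimately have "inv v' \<otimes> v = \<one>" using A_fixes_no_point_of_P_line[OF M N MN _ w] by blast
    then show "v = v'" using vc v'c by (metis inv_equality inv_inv inv_closed)
  qed
  have "(\<lambda>v. ap v w) ` A N \<subseteq> ?T"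
  proof
    fix x assume "x \<in> (\<lambda>v. ap v w) ` A N"
    then obtain v where v: "v \<in> carrier G" and x: "x = ap v w" using A_iff by blast
    have "inc x (P_line M)"
      using inc_ap_al[OF v w(2)] al_fixes_line_through_P[OF v] P_line_spec[OF M] x by simp
    moreover have "x \<noteq> P"
      using ap_inj_iff[OF v w(1) P_in_Pts] ap_fixes_P[OF v] w(3) x by simp
    ultimately show "x \<in> ?T" using ap_closed[OF v w(1)] x by simp
  qed
  moreover have "card ((\<lambda>v. ap v w) ` A N) = card ?T"
    using card_image[OF inj] card_A[OF N] card_P_line_minus_P[OF M] by simp
  ultimately have "(\<lambda>v. ap v w) ` A N = ?T" using finite_Pts by (intro card_subset_eq) auto
  with inj show ?thesis unfolding bij_betw_def by simp
qed

lemma card_A_star_quotients: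
  assumes M: "M \<in> lines_y" and N: "N \<in> lines_y" and MN: "M \<noteq> N" and g: "g \<in> carrier G"
  shows "card {v\<in>A N. g \<otimes> inv v \<in> A_star M} = 1"
proof -
  define w where "w = ap (inv g) (proj M)"
  have z: "proj M \<in> Pts" "proj M \<noteq> P" using proj_spec[OF M] proj_ne_P[OF M] by auto
  have LM: "inc P (P_line M)" "inc (proj M) (P_line M)" using P_line_spec[OF M] by auto
  have wP: "w \<in> Pts" using ap_closed[OF _ z(1)] g w_def by simp
  have gw: "ap g w = proj M" using ap_ap_inv[OF g z(1)] w_def by simp
  have "inc w (P_line M)"
    using inc_ap_al[OF _ LM(2)] al_fixes_line_through_P[OF _ LM(1)] g w_def by simp
  moreover have "w \<noteq> P" using gw ap_fixes_P[OF g] z(2) by auto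
  ultimately have bij: "bij_betw (\<lambda>v. ap v w) (A N) ({x\<in>Pts. inc x (P_line M)} - {P})"
    using A_regular_on_P_line[OF M N MN wP] by simp
  have "g \<otimes> inv v \<in> A_star M \<longleftrightarrow> ap v w = proj M" if v: "v \<in> A N" for v
  proof -
    have vc: "v \<in> carrier G" using v A_iff by simp
    have "g \<otimes> inv v \<in> A_star M \<longleftrightarrow> ap g (ap (inv v) (proj M)) = ap g w"
      using A_star_iff[of "g \<otimes> inv v" M] ap_mult[OF g _ z(1), of "inv v"] g vc gw by simp
    also have "\<dots> \<longleftrightarrow> ap (inv v) (proj M) = w"
      using ap_inj_iff[OF g ap_closed[OF _ z(1)] wP, of "inv v"] vc by simp
    also have "\<dots> \<longleftrightarrow> ap v w = proj M"
      using ap_eq_iff_ap_inv[OF vc wP z(1)] by simp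
    finally show ?thesis .
  qed
  then have "{v\<in>A N. g \<otimes> inv v \<in> A_star M} = {v\<in>A N. ap v w = proj M}" by blast
  then show ?thesis using card_fiber_bij_betw[OF bij] z LM(2) by simp
qed

lemma ex_A_iff_collinear_y:
  assumes h: "h \<in> carrier G"
  shows "(\<exists>M\<in>lines_y. h \<in> A M) \<longleftrightarrow> col y (ap h y)"
proof
  assume "\<exists>M\<in>lines_y. h \<in> A M"
  then show "col y (ap h y)" using A_iff_inc[OF h] collinearI[of y] by blast
next
  assume "col y (ap h y)"
  then obtain M where "M \<in> Lns" "inc y M" "inc (ap h y) M" by (rule collinearE)
  then show "\<exists>M\<in>lines_y. h \<in> A M" using A_iff_inc[OF h] by blast
qed

lemma ex_A_quotient_iff_collinear:
  assumes g: "g \<in> carrier G" and v: "v \<in> carrier G"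
  shows "(\<exists>M\<in>lines_y. g \<otimes> inv v \<in> A M) \<longleftrightarrow> col (ap (inv g) y) (ap (inv v) y)"
proof -
  have "(\<exists>M\<in>lines_y. g \<otimes> inv v \<in> A M) \<longleftrightarrow> col (ap g (ap (inv g) y)) (ap g (ap (inv v) y))"
    using ex_A_iff_collinear_y[of "g \<otimes> inv v"] ap_mult[OF g _ y_in_Pts, of "inv v"]
      ap_ap_inv[OF g y_in_Pts] g v by simp
  also have "\<dots> \<longleftrightarrow> col (ap (inv g) y) (ap (inv v) y)"
    using collinear_ap_iff[OF g ap_closed ap_closed] g v y_in_Pts by simp
  finally show ?thesis .
qed

text \<open>The point of \<open>N\<close> collinear with \<open>w\<close> is not \<open>proj N\<close>, so it is the image of \<open>y\<close> under
  exactly one element of \<open>A N\<close>.\<close>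

lemma card_A_inv_collinear:
  assumes N: "N \<in> lines_y" and w: "w \<in> Pts" "\<not> inc w N" and wz: "\<not> col w (proj N)"
  shows "card {v\<in>A N. col w (ap (inv v) y)} = 1"
proof -
  have NL: "N \<in> Lns" using N by simp
  have sub: "subgroup (A N) G" using subgroup_A[OF N] .
  obtain p where p: "p \<in> Pts" "inc p N" "col w p" using ex1_collinear_on_line[OF w(1) NL w(2)] by blast
  then have "p \<noteq> proj N" using wz by blast
  then obtain u where u: "u \<in> carrier G" "ap u y = p" using ex1_ap_y[OF NC_if_on_line_y[OF N p(2)]] by blast
  have uA: "u \<in> A N" using A_iff_inc[OF u(1) N] u p by simp
  have "{v\<in>A N. col w (ap (inv v) y)} = {inv u}"
  proof (intro equalityI subsetI)
    fix v assume "v \<in> {v\<in>A N. col w (ap (inv v) y)}"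
    then have v: "v \<in> A N" "col w (ap (inv v) y)" by auto
    then have vc: "v \<in> carrier G" and ivA: "inv v \<in> A N"
      using A_iff subgroup.m_inv_closed[OF sub] by auto
    have "inc (ap (inv v) y) N" using A_iff_inc[OF _ N] ivA vc by simp
    then have "ap (inv v) y = ap u y"
      using collinear_on_line_unique[OF w(1) NL w(2) _ p(2) v(2) p(3)] u(2) by simp
    then have "inv v = u" using ap_y_inj[OF _ u(1)] vc by simp
    then show "v \<in> {inv u}" using inv_inv[OF vc] by simp
  next
    fix v assume "v \<in> {inv u}"
    then show "v \<in> {v\<in>A N. col w (ap (inv v) y)}"
      using subgroup.m_inv_closed[OF sub uA] u p by simp
  qed
  then show ?thesis by simp
qed

lemma card_A_quotients_off_A_star:
  assumes N: "N \<in> lines_y" and g: "g \<in> carrier G" and gN: "g \<notin> A_star N"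
  shows "card {v\<in>A N. \<exists>M\<in>lines_y. g \<otimes> inv v \<in> A M} = 1"
proof -
  define w where "w = ap (inv g) y"
  have ig: "inv g \<in> carrier G" using g by simp
  have wP: "w \<in> Pts" using ap_closed[OF ig y_in_Pts] w_def by simp
  have set_eq: "{v\<in>A N. \<exists>M\<in>lines_y. g \<otimes> inv v \<in> A M} = {v\<in>A N. col w (ap (inv v) y)}"
  proof (intro Collect_cong conj_cong refl)
    fix v assume "v \<in> A N"
    then show "(\<exists>M\<in>lines_y. g \<otimes> inv v \<in> A M) \<longleftrightarrow> col w (ap (inv v) y)"
      using ex_A_quotient_iff_collinear[OF g, of v] A_iff w_def by simp
  qed
  have "inv g \<notin> A_star N"
    using subgroup.m_inv_closed[OF subgroup_A_star[OF N]] g gN by force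
  then have "\<not> inc w N" and "\<not> col w (proj N)"
    using A_iff_inc[OF ig N] A_subset_A_star[OF N] A_star_iff_collinear[OF ig N] collinear_sym w_def
    by auto
  with set_eq show ?thesis using card_A_inv_collinear[OF N wP] by simp
qed

section \<open>Identities in the group algebra\<close>

lemma finite_lines_y: "finite lines_y" and card_lines_y: "card lines_y = t + 1"
  using finite_Lns card_lines_through[OF y_in_Pts] by simp_all

lemma A_subset_carrier: "A M \<subseteq> carrier G"
  using A_iff by blast

lemma finite_A: "finite (A M)"
  using finite_carrier A_subset_carrier by (rule finite_subset[rotated])

lemma quotient_eq_one_iff: "g \<in> carrier G \<Longrightarrow> v \<in> carrier G \<Longrightarrow> g \<otimes> inv v = \<one> \<longleftrightarrow> g = v"
  using inv_solve_right'[of \<one> g v] by simp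

lemma card_lines_containing:
  assumes h: "h \<noteq> \<one>"
  shows "card {M\<in>lines_y. h \<in> A M} = (if \<exists>M\<in>lines_y. h \<in> A M then 1 else 0)"
proof (cases "\<exists>M\<in>lines_y. h \<in> A M")
  case True
  then obtain M0 where M0: "M0 \<in> lines_y" "h \<in> A M0" by blast
  then have "{M\<in>lines_y. h \<in> A M} = {M0}" using A_inter_A[OF _ M0(1) _ _ M0(2)] h by blast
  then show ?thesis using True by simp
next
  case False
  then have "{M\<in>lines_y. h \<in> A M} = {}" by blast
  then show ?thesis using False by (simp only: card.empty if_False)
qed

lemma card_other_lines_containing_quotient:
  assumes N: "N \<in> lines_y" and g: "g \<in> carrier G" and v: "v \<in> A N"
  shows "card {M\<in>lines_y - {N}. g \<otimes> inv v \<in> A M} =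
    (if v = g then t else 0) + (if g \<notin> A_star N \<and> (\<exists>M\<in>lines_y. g \<otimes> inv v \<in> A M) then 1 else 0)"
proof -
  let ?h = "g \<otimes> inv v"
  have vc: "v \<in> carrier G" using v A_iff by simp
  have sub: "subgroup (A_star N) G" using subgroup_A_star[OF N] .
  have v_star: "v \<in> A_star N" using v A_subset_A_star[OF N] by blast
  consider (eq) "v = g" | (inside) "v \<noteq> g" "g \<in> A_star N" | (outside) "g \<notin> A_star N"
    by blast
  then show ?thesis
  proof cases
    case eq
    then have E: "{M\<in>lines_y - {N}. ?h \<in> A M} = lines_y - {N}"
      using g subgroup.one_closed[OF subgroup_A] by auto
    show ?thesis unfolding E using eq v_star card_lines_y N finite_lines_y by simp
  next
    case inside
    have "?h \<in> A_star N"
      using inside(2) v_star sub by (simp add: subgroup.m_closed subgroup.m_inv_closed)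
    moreover have "?h \<noteq> \<one>" using inside(1) quotient_eq_one_iff[OF g vc] by simp
    ultimately have E: "{M\<in>lines_y - {N}. ?h \<in> A M} = {}" using A_star_inter_A[OF N] by blast
    show ?thesis unfolding E using inside by simp
  next
    case outside
    have h_out: "?h \<notin> A_star N"
    proof
      assume "?h \<in> A_star N"
      then have "?h \<otimes> v \<in> A_star N" using subgroup.m_closed[OF sub _ v_star] by blast
      then show False using outside g vc by (simp add: m_assoc)
    qed
    then have h_ne: "?h \<noteq> \<one>" using subgroup.one_closed[OF sub] by auto
    have "?h \<notin> A N" using h_out A_subset_A_star[OF N] by blast
    then have "{M\<in>lines_y - {N}. ?h \<in> A M} = {M\<in>lines_y. ?h \<in> A M}" by auto
    then show ?thesis using card_lines_containing[OF h_ne] outside v_star by auto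
  qed
qed

lemma sum_card_A_quotients_other_lines:
  assumes N: "N \<in> lines_y" and g: "g \<in> carrier G"
  shows "(\<Sum>M\<in>lines_y - {N}. card {v\<in>A N. g \<otimes> inv v \<in> A M})
       = (if g \<in> A N then t else 0) + (if g \<notin> A_star N then 1 else 0)"
proof -
  have "(\<Sum>M\<in>lines_y - {N}. card {v\<in>A N. g \<otimes> inv v \<in> A M})
      = (\<Sum>v\<in>A N. card {M\<in>lines_y - {N}. g \<otimes> inv v \<in> A M})"
    by (rule sum_card_filter_swap) (use finite_lines_y finite_A in auto)
  also have "\<dots> = (\<Sum>v\<in>A N. (if v = g then t else 0)
      + (if g \<notin> A_star N \<and> (\<exists>M\<in>lines_y. g \<otimes> inv v \<in> A M) then 1 else 0))"
    by (rule sum.cong[OF refl]) (rule card_other_lines_containing_quotient[OF N g])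
  also have "\<dots> = (\<Sum>v\<in>A N. if v = g then t else 0)
      + (\<Sum>v\<in>A N. if g \<notin> A_star N \<and> (\<exists>M\<in>lines_y. g \<otimes> inv v \<in> A M) then 1 else 0)"
    by (rule sum.distrib)
  also have "(\<Sum>v\<in>A N. if v = g then t else 0) = (if g \<in> A N then t else 0)"
    using finite_A by simp
  also have "(\<Sum>v\<in>A N. if g \<notin> A_star N \<and> (\<exists>M\<in>lines_y. g \<otimes> inv v \<in> A M) then 1 else 0)
      = (if g \<notin> A_star N then card {v\<in>A N. \<exists>M\<in>lines_y. g \<otimes> inv v \<in> A M} else 0)"
    using finite_A by (simp add: sum.If_cases Int_def conj_commute)
  also have "\<dots> = (if g \<notin> A_star N then 1 else 0)"
    using card_A_quotients_off_A_star[OF N g] by simp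
  finally show ?thesis .
qed

lemma sum_card_A_star_quotients:
  assumes N: "N \<in> lines_y" and g: "g \<in> carrier G"
  shows "(\<Sum>M\<in>lines_y. card {v\<in>A N. g \<otimes> inv v \<in> A_star M}) = t + (if g \<in> A_star N then s else 0)"
proof -
  have "(\<Sum>M\<in>lines_y. card {v\<in>A N. g \<otimes> inv v \<in> A_star M})
      = card {v\<in>A N. g \<otimes> inv v \<in> A_star N} + (\<Sum>M\<in>lines_y - {N}. card {v\<in>A N. g \<otimes> inv v \<in> A_star M})"
    using N finite_lines_y by (simp add: sum.remove)
  also have "card {v\<in>A N. g \<otimes> inv v \<in> A_star N} = (if g \<in> A_star N then s else 0)"
    using card_quotients_in_subgroup[OF subgroup_A_star[OF N] A_subset_A_star[OF N] g] card_A[OF N] by simp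
  also have "(\<Sum>M\<in>lines_y - {N}. card {v\<in>A N. g \<otimes> inv v \<in> A_star M}) = t"
    using card_A_star_quotients[OF _ N _ g] card_lines_y N finite_lines_y by simp
  finally show ?thesis by simp
qed

definition sumA :: "'g \<Rightarrow> complex" where "sumA = (\<lambda>g. \<Sum>M\<in>lines_y. indicator (A M) g)"
definition sumA_star :: "'g \<Rightarrow> complex" where "sumA_star = (\<lambda>g. \<Sum>M\<in>lines_y. indicator (A_star M) g)"

lemma group_conv_sum_indicators_sumA:
  "group_conv G (\<lambda>g. \<Sum>M\<in>lines_y. indicator (H M) g) sumA g
     = (\<Sum>N\<in>lines_y. \<Sum>M\<in>lines_y. of_nat (card {v\<in>A N. g \<otimes> inv v \<in> H M}))"
proof -
  have "group_conv G (\<lambda>g. \<Sum>M\<in>lines_y. indicator (H M) g) sumA g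
      = (\<Sum>M\<in>lines_y. \<Sum>N\<in>lines_y. group_conv G (indicator (H M)) (indicator (A N)) g)"
    unfolding sumA_def using finite_lines_y
    by (simp add: group_conv_sum_left group_conv_sum_right)
  also have "\<dots> = (\<Sum>M\<in>lines_y. \<Sum>N\<in>lines_y. of_nat (card {v\<in>A N. g \<otimes> inv v \<in> H M}))"
    by (simp add: group_conv_indicator[OF finite_carrier A_subset_carrier])
  also have "\<dots> = (\<Sum>N\<in>lines_y. \<Sum>M\<in>lines_y. of_nat (card {v\<in>A N. g \<otimes> inv v \<in> H M}))"
    by (rule sum.swap)
  finally show ?thesis .
qed

lemma group_conv_sumA_sumA:
  assumes g: "g \<in> carrier G"
  shows "group_conv G sumA sumA g = of_nat (s + t) * sumA g + of_nat (t + 1) - sumA_star g"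
proof -
  have inner: "(\<Sum>M\<in>lines_y. of_nat (card {v\<in>A N. g \<otimes> inv v \<in> A M}) :: complex)
      = of_nat (s + t) * indicator (A N) g + 1 - indicator (A_star N) g" if N: "N \<in> lines_y" for N
  proof -
    have "(\<Sum>M\<in>lines_y. card {v\<in>A N. g \<otimes> inv v \<in> A M})
        = card {v\<in>A N. g \<otimes> inv v \<in> A N} + (\<Sum>M\<in>lines_y - {N}. card {v\<in>A N. g \<otimes> inv v \<in> A M})"
      using N finite_lines_y by (simp add: sum.remove)
    also have "\<dots> = (if g \<in> A N then s + t else 0) + (if g \<notin> A_star N then 1 else 0)"
      using card_quotients_in_subgroup[OF subgroup_A[OF N] subset_refl g] card_A[OF N]
        sum_card_A_quotients_other_lines[OF N g] by simp
    finally have "(\<Sum>M\<in>lines_y. of_nat (card {v\<in>A N. g \<otimes> inv v \<in> A M}) :: complex)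
        = of_nat ((if g \<in> A N then s + t else 0) + (if g \<notin> A_star N then 1 else 0))"
      by (simp only: of_nat_sum[symmetric])
    then show ?thesis
      using A_subset_A_star[OF N] by (cases "g \<in> A N"; cases "g \<in> A_star N") auto
  qed
  have "group_conv G sumA sumA g = (\<Sum>N\<in>lines_y. of_nat (s + t) * indicator (A N) g + 1 - indicator (A_star N) g)"
    using group_conv_sum_indicators_sumA[of A g] inner unfolding sumA_def[symmetric] by simp
  also have "\<dots> = of_nat (s + t) * sumA g + of_nat (t + 1) - sumA_star g"
    unfolding sumA_def sumA_star_def using card_lines_y
    by (simp add: sum.distrib sum_subtractf sum_distrib_left)
  finally show ?thesis .
qed

lemma group_conv_sumA_star_sumA:
  assumes g: "g \<in> carrier G"
  shows "group_conv G sumA_star sumA g = of_nat s * sumA_star g + of_nat (t * (t + 1))"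
proof -
  have inner: "(\<Sum>M\<in>lines_y. of_nat (card {v\<in>A N. g \<otimes> inv v \<in> A_star M}) :: complex)
      = of_nat s * indicator (A_star N) g + of_nat t" if N: "N \<in> lines_y" for N
    using arg_cong[OF sum_card_A_star_quotients[OF N g], of "of_nat :: nat \<Rightarrow> complex"]
    by (simp add: indicator_def)
  have "group_conv G sumA_star sumA g = (\<Sum>N\<in>lines_y. of_nat s * indicator (A_star N) g + of_nat t)"
    using group_conv_sum_indicators_sumA[of A_star g] inner unfolding sumA_star_def by simp
  also have "\<dots> = of_nat s * sumA_star g + of_nat (t * (t + 1))"
    unfolding sumA_star_def using card_lines_y by (simp add: sum.distrib sum_distrib_left algebra_simps)
  finally show ?thesis .
qed

lemma group_conv_A_A:
  assumes N: "N \<in> lines_y" and g: "g \<in> carrier G"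
  shows "group_conv G (indicator (A N)) (indicator (A N)) g = of_nat s * indicator (A N) g"
  using group_conv_indicator[OF finite_carrier A_subset_carrier, of "A N" N g]
    card_quotients_in_subgroup[OF subgroup_A[OF N] subset_refl g] card_A[OF N]
  by simp

section \<open>Character values\<close>

lemma of_real_set_elem: "complex_of_real (set_elem B g) = indicator B g"
  by (simp add: set_elem_def indicator_def)

lemma char_ext_elem_S:
  assumes rep: "is_rep G n \<rho>" and \<chi>: "\<forall>g\<in>carrier G. \<chi> g = mat_trace (\<rho> g)"
  shows "char_ext G \<chi> (elem_S Pts Lns inc s P G ap al y)
    = of_nat s * mat_trace (rep_ext G n \<rho> sumA) + mat_trace (rep_ext G n \<rho> sumA_star)"
proof -
  interpret group_rep G n \<rho> using finite_carrier rep by unfold_locales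
  have "complex_of_real (elem_S Pts Lns inc s P G ap al y g) = of_nat s * sumA g + sumA_star g" for g
    unfolding elem_S_def sumA_def sumA_star_def of_real_sum
    by (simp add: of_real_set_elem sum.distrib sum_distrib_left)
  then have "char_ext G \<chi> (elem_S Pts Lns inc s P G ap al y)
      = (\<Sum>g\<in>carrier G. (of_nat s * sumA g + sumA_star g) * mat_trace (\<rho> g))"
    unfolding char_ext_def using \<chi> by (intro sum.cong refl) auto
  also have "\<dots> = of_nat s * (\<Sum>g\<in>carrier G. sumA g * mat_trace (\<rho> g))
      + (\<Sum>g\<in>carrier G. sumA_star g * mat_trace (\<rho> g))"
    by (simp add: algebra_simps sum.distrib sum_distrib_left)
  finally show ?thesis by (simp add: mat_trace_rep_ext)
qed

lemma char_ext_elem_T: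
  assumes rep: "is_rep G n \<rho>" and \<chi>: "\<forall>g\<in>carrier G. \<chi> g = mat_trace (\<rho> g)"
  shows "char_ext G \<chi> (elem_T Pts Lns inc t P G ap al y)
    = of_nat t * mat_trace (rep_ext G n \<rho> sumA) - mat_trace (rep_ext G n \<rho> sumA_star)"
proof -
  interpret group_rep G n \<rho> using finite_carrier rep by unfold_locales
  have "complex_of_real (elem_T Pts Lns inc t P G ap al y g) = of_nat t * sumA g - sumA_star g" for g
    unfolding elem_T_def sumA_def sumA_star_def of_real_sum
    by (simp add: of_real_set_elem sum_subtractf sum_distrib_left)
  then have "char_ext G \<chi> (elem_T Pts Lns inc t P G ap al y)
      = (\<Sum>g\<in>carrier G. (of_nat t * sumA g - sumA_star g) * mat_trace (\<rho> g))"
    unfolding char_ext_def using \<chi> by (intro sum.cong refl) auto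
  also have "\<dots> = of_nat t * (\<Sum>g\<in>carrier G. sumA g * mat_trace (\<rho> g))
      - (\<Sum>g\<in>carrier G. sumA_star g * mat_trace (\<rho> g))"
    by (simp add: algebra_simps sum_subtractf sum_distrib_left)
  finally show ?thesis by (simp add: mat_trace_rep_ext)
qed

lemma mat_trace_rep_ext_sumA:
  assumes rep: "is_rep G n \<rho>"
  shows "\<exists>K::nat. mat_trace (rep_ext G n \<rho> sumA) = of_nat s * of_nat K"
proof -
  interpret group_rep G n \<rho> using finite_carrier rep by unfold_locales
  have "\<exists>k::nat. mat_trace (rep_ext G n \<rho> (indicator (A M))) = of_nat s * of_nat k" if M: "M \<in> lines_y" for M
  proof (rule mat_trace_scaled_idempotent)
    have "rep_ext G n \<rho> (indicator (A M)) * rep_ext G n \<rho> (indicator (A M))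
        = rep_ext G n \<rho> (\<lambda>g. of_nat s * indicator (A M) g)"
      unfolding rep_ext_mult by (rule rep_ext_cong) (rule group_conv_A_A[OF M])
    then show "rep_ext G n \<rho> (indicator (A M)) * rep_ext G n \<rho> (indicator (A M))
        = of_nat s \<cdot>\<^sub>m rep_ext G n \<rho> (indicator (A M))"
      by (simp add: rep_ext_smult)
  qed (use s_pos in auto)
  then obtain k where k: "\<forall>M\<in>lines_y. mat_trace (rep_ext G n \<rho> (indicator (A M))) = of_nat s * of_nat (k M)"
    by metis
  have "mat_trace (rep_ext G n \<rho> sumA) = (\<Sum>M\<in>lines_y. mat_trace (rep_ext G n \<rho> (indicator (A M))))"
    unfolding mat_trace_rep_ext sumA_def by (simp add: sum_distrib_right) (rule sum.swap)
  also have "\<dots> = of_nat s * of_nat (\<Sum>M\<in>lines_y. k M)"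
    using k by (simp add: sum_distrib_left)
  finally show ?thesis by blast
qed

text \<open>In a nonlinear irreducible representation the sum of all group elements acts as zero,
  so the group-algebra identities for \<open>sumA\<close> and \<open>sumA_star\<close> lose their constant terms.\<close>

lemma rep_ext_sumA_relations:
  assumes irr: "irreducible_rep G n \<rho>" and n1: "n \<noteq> 1"
  defines "X \<equiv> rep_ext G n \<rho> sumA" and "Y \<equiv> rep_ext G n \<rho> sumA_star"
  shows "X * X = of_nat (s + t) \<cdot>\<^sub>m X - Y" and "Y * X = of_nat s \<cdot>\<^sub>m Y"
proof -
  have rep: "is_rep G n \<rho>" using irr unfolding irreducible_rep_def by blast
  interpret group_rep G n \<rho> using finite_carrier rep by unfold_locales
  note zero = rep_ext_one_eq_zero[OF irr n1]
  have "X * X = rep_ext G n \<rho> (\<lambda>g. of_nat (s + t) * sumA g - sumA_star g + of_nat (t + 1))"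
    unfolding X_def rep_ext_mult by (rule rep_ext_cong) (simp add: group_conv_sumA_sumA)
  then show "X * X = of_nat (s + t) \<cdot>\<^sub>m X - Y"
    unfolding X_def Y_def rep_ext_add_const[OF zero] rep_ext_diff rep_ext_smult .
  have "Y * X = rep_ext G n \<rho> (\<lambda>g. of_nat s * sumA_star g + of_nat (t * (t + 1)))"
    unfolding X_def Y_def rep_ext_mult by (rule rep_ext_cong) (rule group_conv_sumA_star_sumA)
  then show "Y * X = of_nat s \<cdot>\<^sub>m Y"
    unfolding Y_def rep_ext_add_const[OF zero] rep_ext_smult .
qed

lemma mat_traces_rep_ext_sumA:
  assumes irr: "irreducible_rep G n \<rho>" and n1: "n \<noteq> 1"
  defines "X \<equiv> rep_ext G n \<rho> sumA" and "Y \<equiv> rep_ext G n \<rho> sumA_star"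
  obtains K q r :: nat where "mat_trace X = of_nat s * of_nat K"
    and "mat_trace Y = of_nat s * of_nat t * of_nat q"
    and "of_nat t * mat_trace X - mat_trace Y = of_nat t * of_nat (s + t) * of_nat r"
proof -
  have rep: "is_rep G n \<rho>" using irr unfolding irreducible_rep_def by blast
  interpret group_rep G n \<rho> using finite_carrier rep by unfold_locales
  have XY: "X \<in> carrier_mat n n" "Y \<in> carrier_mat n n" unfolding X_def Y_def by simp_all
  have Z: "of_nat t \<cdot>\<^sub>m X - Y \<in> carrier_mat n n" using XY(2) by (rule minus_carrier_mat)
  note rel = rep_ext_sumA_relations[OF irr n1, folded X_def Y_def]
  have ct: "(of_nat (s + t) - of_nat s :: complex) = of_nat t" by simp
  have st: "(of_nat s * of_nat t :: complex) \<noteq> 0" "(of_nat t * of_nat (s + t) :: complex) \<noteq> 0"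
    using s_pos t_pos by (simp_all del: of_nat_add)
  obtain K where K: "mat_trace X = of_nat s * of_nat K"
    using mat_trace_rep_ext_sumA[OF rep] unfolding X_def by blast
  have "Y * Y = (of_nat s * of_nat t) \<cdot>\<^sub>m Y"
    using mat_relations_scaled_idempotent[OF XY rel] unfolding ct .
  then obtain q where q: "mat_trace Y = of_nat s * of_nat t * of_nat q"
    using mat_trace_scaled_idempotent[OF XY(2) _ st(1)] by blast
  have "(of_nat t \<cdot>\<^sub>m X - Y) * (of_nat t \<cdot>\<^sub>m X - Y) = (of_nat t * of_nat (s + t)) \<cdot>\<^sub>m (of_nat t \<cdot>\<^sub>m X - Y)"
    using mat_relations_complement_scaled_idempotent[OF XY rel] unfolding ct .
  then obtain r where r: "mat_trace (of_nat t \<cdot>\<^sub>m X - Y) = of_nat t * of_nat (s + t) * of_nat r"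
    using mat_trace_scaled_idempotent[OF Z _ st(2)] by blast
  have "mat_trace (of_nat t \<cdot>\<^sub>m X - Y) = of_nat t * mat_trace X - mat_trace Y"
    using mat_trace_minus[OF smult_carrier_mat[OF XY(1)] XY(2)] mat_trace_smult[OF XY(1)] by simp
  then have "of_nat t * mat_trace X - mat_trace Y = of_nat t * of_nat (s + t) * of_nat r"
    using r by simp
  then show ?thesis by (rule that[OF K q])
qed

end

text \<open>The witnesses are \<open>\<omega> = r + q\<close> and \<open>z = gcd s t * r / s\<close>; the division is exact because
  \<open>s\<close> divides \<open>(s + t) * r\<close>, hence \<open>t * r\<close>.\<close>

lemma character_values_divisibility:
  fixes x y :: complex and s t K q r :: nat
  assumes t: "t \<noteq> 0" and x: "x = of_nat s * of_nat K" and y: "y = of_nat s * of_nat t * of_nat q"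
    and xy: "of_nat t * x - y = of_nat t * of_nat (s + t) * of_nat r"
  shows "\<exists>\<omega>::nat. of_nat s * x + y = of_nat (s * (s + t)) * of_nat \<omega>"
    and "\<exists>z::nat. of_nat t * x - y = of_nat ((s + t) * s * t) / of_nat (gcd s t) * of_nat z"
proof -
  have "(of_nat t :: complex) * of_nat ((s + t) * r + s * q) = of_nat t * of_nat (s * K)"
    using xy unfolding x y by (simp add: algebra_simps)
  then have key: "(s + t) * r + s * q = s * K" using t by (simp only: mult_cancel_left of_nat_eq_iff) simp
  have "of_nat s * x + y = of_nat (s * (s * K) + s * t * q)"
    unfolding x y by simp
  also have "s * (s * K) + s * t * q = s * ((s + t) * r + s * q) + s * t * q"
    by (simp only: key)
  also have "\<dots> = s * (s + t) * (r + q)"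
    by (simp add: algebra_simps)
  finally have "of_nat s * x + y = of_nat (s * (s + t)) * of_nat (r + q)" by (simp only: of_nat_mult)
  then show "\<exists>\<omega>::nat. of_nat s * x + y = of_nat (s * (s + t)) * of_nat \<omega>" by blast
  have "s dvd (s + t) * r + s * q" unfolding key by simp
  then have "s dvd (s + t) * r" by (simp add: dvd_add_left_iff)
  then have "s dvd t * r" by (simp add: distrib_right dvd_add_right_iff)
  then have "s dvd gcd (s * r) (t * r)" by simp
  then have "s dvd gcd s t * r" by (simp add: gcd_mult_distrib_nat[symmetric] mult.commute)
  then obtain z where sz: "gcd s t * r = s * z" by (rule dvdE)
  have "of_nat t * x - y = of_nat ((s + t) * t * (gcd s t * r)) / of_nat (gcd s t)"
    using xy t by (simp add: field_simps)
  also have "(s + t) * t * (gcd s t * r) = (s + t) * s * t * z" unfolding sz by (simp add: algebra_simps)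
  finally have "of_nat t * x - y = of_nat ((s + t) * s * t) / of_nat (gcd s t) * of_nat z"
    by (simp only: of_nat_mult times_divide_eq_left)
  then show "\<exists>z::nat. of_nat t * x - y = of_nat ((s + t) * s * t) / of_nat (gcd s t) * of_nat z" by blast
qed

theorem proposition2p6:
  fixes Pts :: "'p set" and Lns :: "'l set" and inc :: "'p \<Rightarrow> 'l \<Rightarrow> bool"
    and s t :: nat and P y :: 'p
    and G :: "('g, 'm) monoid_scheme" and ap :: "'g \<Rightarrow> 'p \<Rightarrow> 'p" and al :: "'g \<Rightarrow> 'l \<Rightarrow> 'l"
    and \<chi> :: "'g \<Rightarrow> complex"
  assumes "is_EGQ Pts Lns inc s t P G ap al"
    and "y \<in> noncollinear_pts Pts Lns inc P"
    and "irreducible_character G \<chi>"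
    and "nonlinear_character G \<chi>"
  shows "(\<exists>\<omega>::nat. char_ext G \<chi> (elem_S Pts Lns inc s P G ap al y)
                    = of_nat (s * (s + t)) * of_nat \<omega>) \<and>
         (\<exists>z::nat. char_ext G \<chi> (elem_T Pts Lns inc t P G ap al y)
                    = of_nat ((s + t) * s * t) / of_nat (gcd s t) * of_nat z)"
proof -
  interpret egq Pts Lns inc s t P y G ap al using assms(1,2) by unfold_locales
  obtain n \<rho> where irr: "irreducible_rep G n \<rho>" and \<chi>: "\<forall>g\<in>carrier G. \<chi> g = mat_trace (\<rho> g)"
    using assms(3) unfolding irreducible_character_def by blast
  have rep: "is_rep G n \<rho>" using irr unfolding irreducible_rep_def by blast
  have "\<chi> \<one>\<^bsub>G\<^esub> = of_nat n" using \<chi> rep unfolding is_rep_def mat_trace_def by simp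
  then have "n \<noteq> 1" using assms(4) unfolding nonlinear_character_def by auto
  then obtain K q r where traces:
      "mat_trace (rep_ext G n \<rho> sumA) = of_nat s * of_nat K"
      "mat_trace (rep_ext G n \<rho> sumA_star) = of_nat s * of_nat t * of_nat q"
      "of_nat t * mat_trace (rep_ext G n \<rho> sumA) - mat_trace (rep_ext G n \<rho> sumA_star)
        = of_nat t * of_nat (s + t) * of_nat r"
    using mat_traces_rep_ext_sumA[OF irr] by blast
  have "t \<noteq> 0" using t_pos by simp
  note divisibility = character_values_divisibility[OF this traces]
  show ?thesis
    unfolding char_ext_elem_S[OF rep \<chi>] char_ext_elem_T[OF rep \<chi>] using divisibility by blast
qed

end
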